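(* Let $\{p_i\}_i$ be a probability distribution, $\{\rho^i_{AB}\}_i$ a family of states in $\mathcal{S}_{\leq}(\mathcal{H}_A\otimes\mathcal{H}_B)$, and $\tau_{AB}:=\sum_ip_i\,\rho^i_{AB}$. Then $H_{\max}(A|B)_\tau\geq\sum_ip_i\,H_{\max}(A|B)_{\rho^i}$.
   Context: Hilbert spaces finite-dimensional; $\mathcal{S}_=(\mathcal{H})$: normalized states; $\mathcal{S}_{\leq}(\mathcal{H})=\{\rho\geq0:0<\mathrm{tr}\,\rho\leq1\}$. Logs base 2. $H_{\min}(A|B)_\rho=\max_{\sigma_B\in\mathcal{S}_=(\mathcal{H}_B)}\sup\{\lambda : 2^{-\lambda}\mathbb{1}_A\otimes\sigma_B\geq\rho_{AB}\}$. $H_{\max}(A|B)_\rho:=-H_{\min}(A|C)_\rho$, where $\rho_{ABC}$ is any rank-one purification of $\rho_{AB}$ and $\rho_{AC}$ its marginal (independent of the choice of purification). *)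

theory Defs
  imports "Jordan_Normal_Form.Matrix"
begin

text \<open>Finite-dimensional Hilbert spaces H_A = C^dA, H_B = C^dB, H_C = C^dC.
  Operators are complex matrices; the composite A (x) B is indexed by a*dB + b.\<close>

definition psd :: "nat \<Rightarrow> complex mat \<Rightarrow> bool" where
  "psd n X \<longleftrightarrow> X \<in> carrier_mat n n \<and>
     (\<forall>v \<in> carrier_vec n.
        let q = (\<Sum>i<n. \<Sum>j<n. cnj (v $ i) * X $$ (i, j) * v $ j)
        in Im q = 0 \<and> Re q \<ge> 0)"

definition loewner_ge :: "nat \<Rightarrow> complex mat \<Rightarrow> complex mat \<Rightarrow> bool" where
  "loewner_ge n Y X \<longleftrightarrow> X \<in> carrier_mat n n \<and> Y \<in> carrier_mat n n \<and> psd n (Y - X)"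

definition mtrace :: "complex mat \<Rightarrow> complex" where
  "mtrace X = (\<Sum>i<dim_row X. X $$ (i, i))"

definition norm_state :: "nat \<Rightarrow> complex mat \<Rightarrow> bool" where
  "norm_state n X \<longleftrightarrow> psd n X \<and> mtrace X = 1"

definition subnorm_state :: "nat \<Rightarrow> complex mat \<Rightarrow> bool" where
  "subnorm_state n X \<longleftrightarrow> psd n X \<and> 0 < Re (mtrace X) \<and> Re (mtrace X) \<le> 1"

definition tensor_mat :: "nat \<Rightarrow> nat \<Rightarrow> complex mat \<Rightarrow> complex mat \<Rightarrow> complex mat" where
  "tensor_mat m n X Y = mat (m * n) (m * n)
     (\<lambda>(i, j). X $$ (i div n, j div n) * Y $$ (i mod n, j mod n))"

definition ptrace_right :: "nat \<Rightarrow> nat \<Rightarrow> complex mat \<Rightarrow> complex mat" where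
  "ptrace_right m n X = mat m m (\<lambda>(i, j). \<Sum>k<n. X $$ (i * n + k, j * n + k))"

text \<open>Partial trace over the middle factor B of A (x) B (x) C (index (a*dB+b)*dC+c),
  giving an operator on A (x) C (index a*dC+c).\<close>
definition ptrace_mid :: "nat \<Rightarrow> nat \<Rightarrow> nat \<Rightarrow> complex mat \<Rightarrow> complex mat" where
  "ptrace_mid dA dB dC X = mat (dA * dC) (dA * dC)
     (\<lambda>(i, j). \<Sum>b<dB. X $$ (((i div dC) * dB + b) * dC + i mod dC,
                               ((j div dC) * dB + b) * dC + j mod dC))"

definition ket_bra :: "complex vec \<Rightarrow> complex mat" where
  "ket_bra psi = mat (dim_vec psi) (dim_vec psi) (\<lambda>(i, j). psi $ i * cnj (psi $ j))"

definition Hmin :: "nat \<Rightarrow> nat \<Rightarrow> complex mat \<Rightarrow> real" where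
  "Hmin dA dB rho = Sup {lam. \<exists>sigma. norm_state dB sigma \<and>
       loewner_ge (dA * dB)
         (complex_of_real (2 powr (- lam)) \<cdot>\<^sub>m tensor_mat dA dB (1\<^sub>m dA) sigma) rho}"

definition purification :: "nat \<Rightarrow> nat \<Rightarrow> complex mat \<Rightarrow> nat \<Rightarrow> complex vec \<Rightarrow> bool" where
  "purification dA dB rho dC psi \<longleftrightarrow>
     psi \<in> carrier_vec (dA * dB * dC) \<and> ptrace_right (dA * dB) dC (ket_bra psi) = rho"

text \<open>H_max(A|B)_rho := - H_min(A|C)_rho for a purification rho_ABC of rho_AB
  (independent of the chosen purification; here one is chosen by Hilbert choice).\<close>
definition Hmax :: "nat \<Rightarrow> nat \<Rightarrow> complex mat \<Rightarrow> real" where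
  "Hmax dA dB rho =
     (let (dC, psi) = (SOME (dC, psi). purification dA dB rho dC psi)
      in - Hmin dA dC (ptrace_mid dA dB dC (ket_bra psi)))"

end

theory Submission
  imports Defs
begin

text \<open>Purify \<open>\<tau>\<close> by \<open>\<psi>\<close> and each \<open>\<rho>\<^sub>i\<close> by \<open>\<phi>\<^sub>i\<close>. The vectors \<open>\<oplus>\<^sub>i \<surd>p\<^sub>i \<phi>\<^sub>i\<close> and \<open>\<psi>\<close> have the same
  reduced state on \<open>AB\<close>, so a contraction \<open>T = \<oplus>\<^sub>i T\<^sub>i\<close> on the purifying systems maps \<open>\<psi>\<close> to them.
  If \<open>2\<^sup>-\<^sup>\<lambda> 1\<^sub>A \<otimes> \<sigma> \<ge> \<omega>\<^sub>\<tau>\<close> on \<open>AC\<close>, conjugating by \<open>T\<^sub>i\<close> gives \<open>2\<^sup>-\<^sup>\<lambda> 1\<^sub>A \<otimes> T\<^sub>i \<sigma> T\<^sub>i\<^sup>* \<ge> p\<^sub>i \<omega>\<^sub>i\<close>,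
  i.e. \<open>H\<^sub>m\<^sub>i\<^sub>n(A|C\<^sub>i) \<ge> \<lambda> + log p\<^sub>i - log t\<^sub>i\<close> with \<open>t\<^sub>i = tr T\<^sub>i \<sigma> T\<^sub>i\<^sup>*\<close> and \<open>\<Sum>\<^sub>i t\<^sub>i \<le> 1\<close>.
  Averaging with weights \<open>p\<^sub>i\<close> and using \<open>\<Sum>\<^sub>i p\<^sub>i log (p\<^sub>i/t\<^sub>i) \<ge> 0\<close> (Gibbs) bounds every
  feasible \<open>\<lambda>\<close> for \<open>H\<^sub>m\<^sub>i\<^sub>n(A|C)\<^sub>\<omega>\<^sub>\<tau>\<close> by \<open>\<Sum>\<^sub>i p\<^sub>i H\<^sub>m\<^sub>i\<^sub>n(A|C\<^sub>i)\<close>, which is the claim after negation.\<close>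

section \<open>Sesquilinear forms and positive semidefinite matrices\<close>

text \<open>Vectors are plain functions \<open>nat \<Rightarrow> complex\<close>; only the first \<open>n\<close> entries matter.\<close>

definition sesq_form :: "nat \<Rightarrow> complex mat \<Rightarrow> (nat \<Rightarrow> complex) \<Rightarrow> (nat \<Rightarrow> complex) \<Rightarrow> complex" where
  "sesq_form n X u w = (\<Sum>i<n. \<Sum>j<n. cnj (u i) * X $$ (i, j) * w j)"

abbreviation quad_form :: "nat \<Rightarrow> complex mat \<Rightarrow> (nat \<Rightarrow> complex) \<Rightarrow> complex" where
  "quad_form n X v \<equiv> sesq_form n X v v"

definition unit_fun :: "nat \<Rightarrow> nat \<Rightarrow> complex" where
  "unit_fun k i = (if i = k then 1 else 0)"

lemma sesq_form_cong:
  "(\<And>i. i < n \<Longrightarrow> u i = u' i) \<Longrightarrow> (\<And>i. i < n \<Longrightarrow> w i = w' i) \<Longrightarrow> sesq_form n X u w = sesq_form n X u' w'"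
  unfolding sesq_form_def by (intro sum.cong) auto

lemma sesq_form_add_left: "sesq_form n X (\<lambda>i. u i + w i) z = sesq_form n X u z + sesq_form n X w z"
  unfolding sesq_form_def by (simp add: distrib_left distrib_right sum.distrib)

lemma sesq_form_add_right: "sesq_form n X z (\<lambda>i. u i + w i) = sesq_form n X z u + sesq_form n X z w"
  unfolding sesq_form_def by (simp add: distrib_left distrib_right sum.distrib)

lemma sesq_form_scale_left: "sesq_form n X (\<lambda>i. a * u i) z = cnj a * sesq_form n X u z"
  unfolding sesq_form_def by (simp add: sum_distrib_left mult_ac)

lemma sesq_form_scale_right: "sesq_form n X z (\<lambda>i. a * u i) = a * sesq_form n X z u"
  unfolding sesq_form_def by (simp add: sum_distrib_left mult_ac)

lemma sesq_form_unit_left: "k < n \<Longrightarrow> sesq_form n X (unit_fun k) w = (\<Sum>j<n. X $$ (k, j) * w j)"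
  unfolding sesq_form_def unit_fun_def by (simp add: if_distrib if_distribR sum.If_cases cong: if_cong)

lemma sesq_form_unit_right: "k < n \<Longrightarrow> sesq_form n X u (unit_fun k) = (\<Sum>i<n. cnj (u i) * X $$ (i, k))"
  unfolding sesq_form_def unit_fun_def by (simp add: if_distrib if_distribR sum.If_cases cong: if_cong)

lemma sesq_form_unit_unit: "k < n \<Longrightarrow> l < n \<Longrightarrow> sesq_form n X (unit_fun k) (unit_fun l) = X $$ (k, l)"
  by (simp add: sesq_form_unit_left) (simp add: unit_fun_def if_distrib if_distribR sum.If_cases cong: if_cong)

lemma sesq_form_minus:
  assumes "X \<in> carrier_mat n n" "Y \<in> carrier_mat n n"
  shows "sesq_form n (X - Y) u w = sesq_form n X u w - sesq_form n Y u w"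
  unfolding sesq_form_def using assms by (simp add: algebra_simps sum_subtractf)

lemma sesq_form_smult: "X \<in> carrier_mat n n \<Longrightarrow> sesq_form n (a \<cdot>\<^sub>m X) u w = a * sesq_form n X u w"
  unfolding sesq_form_def by (simp add: sum_distrib_left mult_ac)

lemma sesq_form_one: "sesq_form n (1\<^sub>m n) u w = (\<Sum>i<n. cnj (u i) * w i)"
proof -
  have "sesq_form n (1\<^sub>m n) u w = (\<Sum>i<n. \<Sum>j<n. if j = i then cnj (u i) * w i else 0)"
    unfolding sesq_form_def by (intro sum.cong refl) auto
  then show ?thesis by simp
qed

lemma sesq_form_outer: "sesq_form n (mat n n (\<lambda>(i,j). c i * cnj (c j))) u w
   = (\<Sum>i<n. cnj (u i) * c i) * cnj (\<Sum>j<n. cnj (w j) * c j)"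
  unfolding sesq_form_def by (simp add: sum_distrib_left sum_distrib_right mult_ac, rule sum.swap)

lemma sesq_form_gram:
  assumes "X \<in> carrier_mat n n" "\<And>i j. i < n \<Longrightarrow> j < n \<Longrightarrow> X $$ (i, j) = (\<Sum>b<m. w b i * cnj (w b j))"
  shows "sesq_form n X u v = (\<Sum>b<m. (\<Sum>i<n. cnj (u i) * w b i) * cnj (\<Sum>j<n. cnj (v j) * w b j))"
proof -
  have "sesq_form n X u v = (\<Sum>i<n. \<Sum>j<n. \<Sum>b<m. cnj (u i) * w b i * (cnj (w b j) * v j))"
    unfolding sesq_form_def using assms(2) by (simp add: sum_distrib_left sum_distrib_right mult_ac)
  also have "\<dots> = (\<Sum>b<m. \<Sum>i<n. \<Sum>j<n. cnj (u i) * w b i * (cnj (w b j) * v j))"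
    by (subst sum.swap, rule sum.cong[OF refl], rule sum.swap)
  also have "\<dots> = (\<Sum>b<m. (\<Sum>i<n. cnj (u i) * w b i) * cnj (\<Sum>j<n. cnj (v j) * w b j))"
    by (simp add: sum_distrib_left sum_distrib_right mult_ac)
  finally show ?thesis .
qed

lemma sum_cnj_mult_self: "(\<Sum>i\<in>S. cnj (u i) * u i) = of_real (\<Sum>i\<in>S. (cmod (u i))^2)"
  unfolding of_real_sum by (rule sum.cong[OF refl]) (metis complex_norm_square mult.commute)

lemma psd_iff_quad_form: "psd n X \<longleftrightarrow> X \<in> carrier_mat n n \<and> (\<forall>v. 0 \<le> quad_form n X v)"
proof -
  have "(\<Sum>i<n. \<Sum>j<n. cnj (v $ i) * X $$ (i, j) * v $ j) = quad_form n X (\<lambda>i. v $ i)" for v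
    unfolding sesq_form_def ..
  moreover have "quad_form n X w = quad_form n X (\<lambda>i. vec n w $ i)" for w
    by (intro sesq_form_cong) simp_all
  ultimately show ?thesis
    unfolding psd_def Let_def less_eq_complex_def by (metis vec_carrier zero_complex.sel)
qed

lemma psd_carrier: "psd n X \<Longrightarrow> X \<in> carrier_mat n n"
  by (simp add: psd_def)

lemma psd_quad_form_nonneg: "psd n X \<Longrightarrow> 0 \<le> quad_form n X v"
  by (simp add: psd_iff_quad_form)

lemma psd_smult_nonneg: "psd n X \<Longrightarrow> a \<ge> 0 \<Longrightarrow> psd n (complex_of_real a \<cdot>\<^sub>m X)"
  unfolding psd_iff_quad_form by (auto simp: sesq_form_smult less_eq_complex_def intro!: mult_nonneg_nonneg)

lemma psd_diag_nonneg: assumes "psd n X" "i < n" shows "0 \<le> X $$ (i, i)"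
  using psd_quad_form_nonneg[OF assms(1), of "unit_fun i"] sesq_form_unit_unit[OF assms(2) assms(2)] by simp

lemma psd_diag_real: assumes "psd n X" "i < n" shows "X $$ (i, i) = of_real (Re (X $$ (i, i)))"
  using psd_diag_nonneg[OF assms] by (simp add: less_eq_complex_def complex_eq_iff)

lemma psd_hermitian: assumes "psd n X" "i < n" "j < n" shows "X $$ (j, i) = cnj (X $$ (i, j))"
proof -
  have q1: "0 \<le> quad_form n X (\<lambda>k. unit_fun i k + unit_fun j k)" by (rule psd_quad_form_nonneg[OF assms(1)])
  have q2: "0 \<le> quad_form n X (\<lambda>k. unit_fun i k + \<i> * unit_fun j k)" by (rule psd_quad_form_nonneg[OF assms(1)])
  have e1: "quad_form n X (\<lambda>k. unit_fun i k + unit_fun j k) = X$$(i,i) + X$$(i,j) + X$$(j,i) + X$$(j,j)"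
    by (simp only: sesq_form_add_left sesq_form_add_right sesq_form_unit_unit assms) simp
  have e2: "quad_form n X (\<lambda>k. unit_fun i k + \<i> * unit_fun j k)
      = X$$(i,i) + \<i> * X$$(i,j) - \<i> * X$$(j,i) + X$$(j,j)"
    by (simp only: sesq_form_add_left sesq_form_add_right sesq_form_scale_left sesq_form_scale_right
        sesq_form_unit_unit assms) simp
  have d: "Im (X$$(i,i)) = 0" "Im (X$$(j,j)) = 0"
    using psd_diag_nonneg[OF assms(1) assms(2)] psd_diag_nonneg[OF assms(1) assms(3)]
    by (auto simp: less_eq_complex_def)
  from q1 e1 d have "Im (X$$(i,j)) + Im (X$$(j,i)) = 0" by (simp add: less_eq_complex_def)
  moreover from q2 e2 d have "Re (X$$(i,j)) - Re (X$$(j,i)) = 0" by (simp add: less_eq_complex_def)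
  ultimately show ?thesis by (intro complex_eqI) auto
qed

text \<open>If \<open>X\<^sub>i\<^sub>i = 0\<close> but \<open>X\<^sub>i\<^sub>k = z \<noteq> 0\<close>, the form at \<open>s e\<^sub>i + e\<^sub>k\<close> with \<open>s = -r z\<close> equals
  \<open>X\<^sub>k\<^sub>k - 2r|z|\<^sup>2\<close>, which is negative for large \<open>r\<close>.\<close>

lemma psd_zero_diag_row: assumes "psd n X" "i < n" "k < n" "X $$ (i, i) = 0" shows "X $$ (i, k) = 0"
proof (rule ccontr)
  assume nz: "X $$ (i, k) \<noteq> 0"
  define z where "z = X $$ (i, k)"
  define d where "d = Re (X $$ (k, k))"
  define r where "r = (d + 1) / (2 * (cmod z)^2)"
  define s where "s = - (of_real r) * z"
  have Xkk: "X $$ (k, k) = of_real d" using psd_diag_real[OF assms(1) assms(3)] d_def by simp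
  have Xki: "X $$ (k, i) = cnj z" using psd_hermitian[OF assms(1) assms(2) assms(3)] z_def by simp
  have zz: "cnj z * z = of_real ((cmod z)^2)" "z * cnj z = of_real ((cmod z)^2)"
    using complex_norm_square[of z] by (simp_all add: mult.commute)
  have "quad_form n X (\<lambda>l. s * unit_fun i l + unit_fun k l)
      = cnj s * s * X$$(i,i) + cnj s * X$$(i,k) + s * X$$(k,i) + X$$(k,k)"
    by (simp only: sesq_form_add_left sesq_form_add_right sesq_form_scale_left sesq_form_scale_right
        sesq_form_unit_unit assms) (simp add: algebra_simps)
  also have "\<dots> = - (of_real r) * (cnj z * z) - of_real r * (z * cnj z) + of_real d"
    unfolding s_def using assms(4) Xki Xkk z_def[symmetric] by (simp add: algebra_simps)
  also have "\<dots> = of_real (d - 2 * r * (cmod z)^2)" unfolding zz by simp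
  also have "d - 2 * r * (cmod z)^2 = -1" unfolding r_def using nz z_def by (simp add: field_simps)
  finally have "quad_form n X (\<lambda>l. s * unit_fun i l + unit_fun k l) = -1" by simp
  with psd_quad_form_nonneg[OF assms(1), of "\<lambda>l. s * unit_fun i l + unit_fun k l"]
  show False by (simp add: less_eq_complex_def)
qed

text \<open>One step of a Cholesky factorisation: subtracting the outer product of the scaled
  pivot column keeps \<open>X\<close> positive semidefinite (Schur complement).\<close>

definition pivot_col :: "complex mat \<Rightarrow> nat \<Rightarrow> nat \<Rightarrow> complex" where
  "pivot_col X k i = X $$ (i, k) / of_real (sqrt (Re (X $$ (k, k))))"

definition diag_support :: "nat \<Rightarrow> complex mat \<Rightarrow> nat set" where
  "diag_support n X = {i. i < n \<and> X $$ (i, i) \<noteq> 0}"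

lemma pivot_col_norm:
  assumes "psd n X" "k < n" "X $$ (k, k) \<noteq> 0"
  shows "pivot_col X k k * cnj (pivot_col X k k) = X $$ (k, k)"
proof -
  define d where "d = Re (X $$ (k, k))"
  have Xkk: "X $$ (k, k) = of_real d" using psd_diag_real[OF assms(1,2)] d_def by simp
  then have "d > 0" using psd_diag_nonneg[OF assms(1,2)] assms(3) by (auto simp: less_eq_complex_def)
  then have "of_real (sqrt d) * of_real (sqrt d) = (of_real d :: complex)"
    by (simp flip: of_real_mult)
  then show ?thesis unfolding pivot_col_def d_def[symmetric] Xkk using \<open>d > 0\<close> by (simp add: field_simps)
qed

lemma psd_minus_pivot_outer:
  assumes "psd n X" "k < n" "X $$ (k, k) \<noteq> 0"
  shows "psd n (X - mat n n (\<lambda>(i,j). pivot_col X k i * cnj (pivot_col X k j)))"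
  unfolding psd_iff_quad_form
proof (intro conjI allI)
  define c where "c = pivot_col X k"
  define d where "d = Re (X $$ (k, k))"
  have car: "X \<in> carrier_mat n n" using psd_carrier[OF assms(1)] .
  have Xkk: "X $$ (k, k) = of_real d" using psd_diag_real[OF assms(1,2)] d_def by simp
  have dpos: "d > 0" using psd_diag_nonneg[OF assms(1,2)] assms(3) Xkk by (auto simp: less_eq_complex_def)
  show "X - mat n n (\<lambda>(i,j). pivot_col X k i * cnj (pivot_col X k j)) \<in> carrier_mat n n"
    by (rule minus_carrier_mat) simp
  fix v
  define \<beta> where "\<beta> = (\<Sum>i<n. cnj (v i) * X $$ (i, k))"
  text \<open>Minimise the form along \<open>v + t e\<^sub>k\<close>; the minimum is the Schur complement form.\<close>
  define t where "t = - cnj \<beta> / of_real d"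
  have "sesq_form n X (unit_fun k) v = (\<Sum>j<n. cnj (X $$ (j, k)) * v j)"
    using sesq_form_unit_left[OF assms(2)] psd_hermitian[OF assms(1) _ assms(2)]
    by (auto intro!: sum.cong)
  then have left: "sesq_form n X (unit_fun k) v = cnj \<beta>" by (simp add: \<beta>_def mult.commute)
  have right: "sesq_form n X v (unit_fun k) = \<beta>" using sesq_form_unit_right[OF assms(2)] \<beta>_def by simp
  have "quad_form n X (\<lambda>l. v l + t * unit_fun k l)
      = quad_form n X v + (t * \<beta> + cnj t * cnj \<beta> + cnj t * t * of_real d)"
    by (simp only: sesq_form_add_left sesq_form_add_right sesq_form_scale_left sesq_form_scale_right
        sesq_form_unit_unit assms(2) left right Xkk) (simp add: algebra_simps)
  also have "t * \<beta> + cnj t * cnj \<beta> + cnj t * t * of_real d = - (\<beta> * cnj \<beta> / of_real d)"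
    unfolding t_def using dpos by (simp add: field_simps)
  also have "\<beta> * cnj \<beta> / of_real d = (\<beta> / of_real (sqrt d)) * cnj (\<beta> / of_real (sqrt d))"
    using dpos by (simp add: field_simps flip: of_real_mult)
  also have "(\<beta> / of_real (sqrt d)) = (\<Sum>i<n. cnj (v i) * c i)"
    unfolding \<beta>_def c_def d_def pivot_col_def by (simp add: sum_divide_distrib)
  finally have "quad_form n X (\<lambda>l. v l + t * unit_fun k l)
      = quad_form n (X - mat n n (\<lambda>(i,j). c i * cnj (c j))) v"
    by (simp add: sesq_form_minus[OF car] sesq_form_outer)
  then show "0 \<le> quad_form n (X - mat n n (\<lambda>(i,j). pivot_col X k i * cnj (pivot_col X k j))) v"
    using psd_quad_form_nonneg[OF assms(1)] c_def by metis
qed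

lemma diag_support_minus_pivot_outer:
  assumes "psd n X" "k < n" "X $$ (k, k) \<noteq> 0"
  shows "diag_support n (X - mat n n (\<lambda>(i,j). pivot_col X k i * cnj (pivot_col X k j)))
    \<subseteq> diag_support n X - {k}"
proof
  fix i assume "i \<in> diag_support n (X - mat n n (\<lambda>(i,j). pivot_col X k i * cnj (pivot_col X k j)))"
  then have i: "i < n" and nz: "X $$ (i, i) - pivot_col X k i * cnj (pivot_col X k i) \<noteq> 0"
    using psd_carrier[OF assms(1)] by (auto simp: diag_support_def)
  have "i \<noteq> k" using nz pivot_col_norm[OF assms] by auto
  moreover have "X $$ (i, i) \<noteq> 0"
    using nz psd_zero_diag_row[OF assms(1) i assms(2)] by (auto simp: pivot_col_def)
  ultimately show "i \<in> diag_support n X - {k}" using i by (simp add: diag_support_def)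
qed

lemma psd_gram_factor_card:
  "psd n X \<Longrightarrow> card (diag_support n X) \<le> N \<Longrightarrow>
     \<exists>c. \<forall>i<n. \<forall>j<n. X $$ (i, j) = (\<Sum>k<N. c k i * cnj (c k j))"
proof (induction N arbitrary: X)
  case 0
  then have "\<forall>i<n. \<forall>j<n. X $$ (i, j) = 0"
    using psd_zero_diag_row by (fastforce simp: diag_support_def)
  then show ?case by simp
next
  case (Suc N)
  show ?case
  proof (cases "diag_support n X = {}")
    case True
    then have "\<forall>i<n. \<forall>j<n. X $$ (i, j) = 0"
      using psd_zero_diag_row Suc.prems(1) by (fastforce simp: diag_support_def)
    then show ?thesis by (intro exI[of _ "\<lambda>_ _. 0"]) simp
  next
    case False
    then obtain k where k: "k < n" "X $$ (k, k) \<noteq> 0" by (auto simp: diag_support_def)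
    define c where "c = pivot_col X k"
    define Y where "Y = X - mat n n (\<lambda>(i,j). c i * cnj (c j))"
    have "card (diag_support n Y) \<le> card (diag_support n X - {k})"
      unfolding Y_def c_def
      by (rule card_mono[OF _ diag_support_minus_pivot_outer[OF Suc.prems(1) k]])
        (simp add: diag_support_def)
    also have "\<dots> \<le> N" using Suc.prems(2) k by (simp add: card_Diff_singleton diag_support_def)
    finally obtain d where d: "\<forall>i<n. \<forall>j<n. Y $$ (i, j) = (\<Sum>k<N. d k i * cnj (d k j))"
      using Suc.IH psd_minus_pivot_outer[OF Suc.prems(1) k] unfolding Y_def c_def by blast
    have "X $$ (i, j) = (\<Sum>l<Suc N. (d(N := c)) l i * cnj ((d(N := c)) l j))" if "i < n" "j < n" for i j
      using d that psd_carrier[OF Suc.prems(1)] by (simp add: Y_def) (metis diff_add_cancel)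
    then show ?thesis by blast
  qed
qed

lemma psd_gram_factor:
  assumes "psd n X"
  obtains c where "\<And>i j. i < n \<Longrightarrow> j < n \<Longrightarrow> X $$ (i, j) = (\<Sum>k<n. c k i * cnj (c k j))"
proof -
  have "card (diag_support n X) \<le> n"
    using card_mono[of "{..<n}" "diag_support n X"] by (auto simp: diag_support_def)
  then show ?thesis using psd_gram_factor_card[OF assms] that by blast
qed

section \<open>Vectors with equal Gram matrices\<close>

definition inner_on :: "'a set \<Rightarrow> ('a \<Rightarrow> complex) \<Rightarrow> ('a \<Rightarrow> complex) \<Rightarrow> complex" where
  "inner_on K u w = (\<Sum>k\<in>K. u k * cnj (w k))"

lemma inner_on_cong:
  "(\<And>k. k \<in> K \<Longrightarrow> u k = u' k) \<Longrightarrow> (\<And>k. k \<in> K \<Longrightarrow> w k = w' k) \<Longrightarrow> inner_on K u w = inner_on K u' w'"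
  unfolding inner_on_def by (intro sum.cong) auto

lemma inner_on_sum_left: "inner_on K (\<lambda>k. \<Sum>l\<in>L. a l * g l k) w = (\<Sum>l\<in>L. a l * inner_on K (g l) w)"
  unfolding inner_on_def by (simp add: sum_distrib_right sum_distrib_left mult_ac, rule sum.swap)

lemma inner_on_sum_right: "inner_on K u (\<lambda>k. \<Sum>l\<in>L. a l * g l k) = (\<Sum>l\<in>L. cnj (a l) * inner_on K u (g l))"
  unfolding inner_on_def by (simp add: sum_distrib_right sum_distrib_left mult_ac, rule sum.swap)

lemma inner_on_add_left: "inner_on K (\<lambda>k. u k + v k) w = inner_on K u w + inner_on K v w"
  unfolding inner_on_def by (simp add: algebra_simps sum.distrib)

lemma inner_on_diff_left: "inner_on K (\<lambda>k. u k - v k) w = inner_on K u w - inner_on K v w"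
  unfolding inner_on_def by (simp add: algebra_simps sum_subtractf)

lemma inner_on_diff_right: "inner_on K w (\<lambda>k. u k - v k) = inner_on K w u - inner_on K w v"
  unfolding inner_on_def by (simp add: algebra_simps sum_subtractf)

lemma inner_on_div_left: "inner_on K (\<lambda>k. u k / a) w = inner_on K u w / a"
  unfolding inner_on_def by (simp add: sum_divide_distrib)

lemma inner_on_div_right: "inner_on K w (\<lambda>k. u k / a) = inner_on K w u / cnj a"
  unfolding inner_on_def by (simp add: sum_divide_distrib)

lemma inner_on_commute: "inner_on K w u = cnj (inner_on K u w)"
  unfolding inner_on_def by (simp add: mult.commute)

lemma inner_on_self: "inner_on K u u = of_real (\<Sum>k\<in>K. (cmod (u k))^2)"
  by (simp only: inner_on_def of_real_sum complex_norm_square)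

lemma inner_on_self_nonneg: "0 \<le> Re (inner_on K u u)"
  unfolding inner_on_self by (simp add: sum_nonneg)

lemma inner_on_self_eq_0:
  assumes "finite K" "inner_on K u u = 0" "k \<in> K"
  shows "u k = 0"
proof -
  have "(\<Sum>k\<in>K. (cmod (u k))^2) = 0" using assms(2) unfolding inner_on_self by (simp only: of_real_eq_0_iff)
  then show ?thesis using assms(1,3) by (subst (asm) sum_nonneg_eq_0_iff) auto
qed

lemma sum_unit_fun_minus_comb:
  assumes "M < N"
  shows "(\<Sum>x<N. (unit_fun M x - (\<Sum>l<L. a l * \<beta> l x)) * v x)
    = v M - (\<Sum>l<L. a l * (\<Sum>x<N. \<beta> l x * v x))"
proof -
  have "(\<Sum>x<N. unit_fun M x * v x) = (\<Sum>x<N. if x = M then v x else 0)"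
    by (intro sum.cong) (auto simp: unit_fun_def)
  then have "(\<Sum>x<N. unit_fun M x * v x) = v M" using assms by simp
  moreover have "(\<Sum>x<N. (\<Sum>l<L. a l * \<beta> l x) * v x) = (\<Sum>l<L. a l * (\<Sum>x<N. \<beta> l x * v x))"
    unfolding sum_distrib_right sum_distrib_left by (subst sum.swap) (simp add: mult.assoc)
  ultimately show ?thesis by (simp add: left_diff_distrib sum_subtractf)
qed

lemma inner_on_orthonormal_comb:
  assumes "\<And>l l'. l < L \<Longrightarrow> l' < L \<Longrightarrow> inner_on A (g l) (g l') = (if l = l' then 1 else 0)"
  shows "inner_on A (\<lambda>a. \<Sum>l<(L::nat). \<alpha> l * g l a) (\<lambda>a. \<Sum>l<L. \<beta> l * g l a) = (\<Sum>l<L. \<alpha> l * cnj (\<beta> l))"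
proof -
  have "(\<Sum>l'<L. cnj (\<beta> l') * inner_on A (g l) (g l')) = cnj (\<beta> l)" if "l < L" for l
  proof -
    have "(\<Sum>l'<L. cnj (\<beta> l') * inner_on A (g l) (g l')) = (\<Sum>l'<L. if l' = l then cnj (\<beta> l') else 0)"
      using assms that by (intro sum.cong) auto
    then show ?thesis using that by simp
  qed
  then show ?thesis by (simp add: inner_on_sum_left inner_on_sum_right)
qed

lemma bessel_inequality:
  assumes "\<And>l l'. l < L \<Longrightarrow> l' < L \<Longrightarrow> inner_on K (e l) (e l') = (if l = l' then 1 else 0)"
  shows "Re (\<Sum>l<(L::nat). inner_on K u (e l) * cnj (inner_on K u (e l))) \<le> Re (inner_on K u u)"
proof -
  define \<alpha> where "\<alpha> l = inner_on K u (e l)" for l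
  define S where "S = (\<Sum>l<L. \<alpha> l * cnj (\<alpha> l))"
  have c1: "inner_on K u (\<lambda>k. \<Sum>l<L. \<alpha> l * e l k) = S"
    unfolding inner_on_sum_right S_def \<alpha>_def by (simp add: mult.commute)
  have c2: "inner_on K (\<lambda>k. \<Sum>l<L. \<alpha> l * e l k) u = S"
    unfolding inner_on_sum_left S_def \<alpha>_def by (subst (2) inner_on_commute) simp
  have c3: "inner_on K (\<lambda>k. \<Sum>l<L. \<alpha> l * e l k) (\<lambda>k. \<Sum>l<L. \<alpha> l * e l k) = S"
    unfolding S_def by (rule inner_on_orthonormal_comb[OF assms])
  have "inner_on K (\<lambda>k. u k - (\<Sum>l<L. \<alpha> l * e l k)) (\<lambda>k. u k - (\<Sum>l<L. \<alpha> l * e l k))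
      = inner_on K u u - S"
    by (simp add: inner_on_diff_left inner_on_diff_right c1 c2 c3)
  then show ?thesis using inner_on_self_nonneg[of K "\<lambda>k. u k - (\<Sum>l<L. \<alpha> l * e l k)"]
    by (simp add: S_def \<alpha>_def)
qed

text \<open>Gram--Schmidt on the
  \<open>r\<^sub>x\<close>, performed by coefficient vectors \<open>\<beta>\<close> that are then applied to the \<open>s\<^sub>x\<close> as well, yields a
  partial isometry mapping every \<open>r\<^sub>x\<close> to \<open>s\<^sub>x\<close>.\<close>

locale equal_gram =
  fixes K :: "'k set" and J :: "'j set" and N :: nat
    and r :: "nat \<Rightarrow> 'k \<Rightarrow> complex" and s :: "nat \<Rightarrow> 'j \<Rightarrow> complex"
  assumes finite_K: "finite K" and finite_J: "finite J"
    and gram_eq: "\<And>x y. x < N \<Longrightarrow> y < N \<Longrightarrow> inner_on K (r x) (r y) = inner_on J (s x) (s y)"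
begin

definition comb_r :: "(nat \<Rightarrow> complex) \<Rightarrow> 'k \<Rightarrow> complex" where
  "comb_r g = (\<lambda>k. \<Sum>x<N. g x * r x k)"

definition comb_s :: "(nat \<Rightarrow> complex) \<Rightarrow> 'j \<Rightarrow> complex" where
  "comb_s g = (\<lambda>j. \<Sum>x<N. g x * s x j)"

lemma inner_on_comb_s: "inner_on J (comb_s g) (comb_s d) = inner_on K (comb_r g) (comb_r d)"
  unfolding comb_r_def comb_s_def inner_on_sum_left inner_on_sum_right using gram_eq
  by (auto intro!: sum.cong)

lemma comb_r_div: "comb_r (\<lambda>x. g x / c) = (\<lambda>k. comb_r g k / c)"
  unfolding comb_r_def by (simp add: sum_divide_distrib)

lemma comb_s_div: "comb_s (\<lambda>x. g x / c) = (\<lambda>k. comb_s g k / c)"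
  unfolding comb_s_def by (simp add: sum_divide_distrib)

lemma comb_r_unit_minus:
  "M < N \<Longrightarrow> comb_r (\<lambda>x. unit_fun M x - (\<Sum>l<L. a l * \<beta> l x)) k = r M k - (\<Sum>l<L. a l * comb_r (\<beta> l) k)"
  unfolding comb_r_def by (rule sum_unit_fun_minus_comb)

lemma comb_s_unit_minus:
  "M < N \<Longrightarrow> comb_s (\<lambda>x. unit_fun M x - (\<Sum>l<L. a l * \<beta> l x)) j = s M j - (\<Sum>l<L. a l * comb_s (\<beta> l) j)"
  unfolding comb_s_def by (rule sum_unit_fun_minus_comb)

definition gs_basis :: "nat \<Rightarrow> nat \<Rightarrow> (nat \<Rightarrow> nat \<Rightarrow> complex) \<Rightarrow> bool" where
  "gs_basis M L \<beta> \<longleftrightarrow>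
     (\<forall>l<L. \<forall>l'<L. inner_on K (comb_r (\<beta> l)) (comb_r (\<beta> l')) = (if l = l' then 1 else 0)) \<and>
     (\<forall>x<M. \<forall>k\<in>K. r x k = (\<Sum>l<L. inner_on K (r x) (comb_r (\<beta> l)) * comb_r (\<beta> l) k)) \<and>
     (\<forall>x<M. \<forall>j\<in>J. s x j = (\<Sum>l<L. inner_on K (r x) (comb_r (\<beta> l)) * comb_s (\<beta> l) j))"

context
  fixes M L :: nat and \<beta> :: "nat \<Rightarrow> nat \<Rightarrow> complex"
  assumes M_less: "M < N" and basis: "gs_basis M L \<beta>"
begin

definition gs_coeff :: "nat \<Rightarrow> complex" where
  "gs_coeff l = inner_on K (r M) (comb_r (\<beta> l))"

definition gs_residual :: "nat \<Rightarrow> complex" where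
  "gs_residual = (\<lambda>x. unit_fun M x - (\<Sum>l<L. gs_coeff l * \<beta> l x))"

lemma gs_orthonormal:
  "l < L \<Longrightarrow> l' < L \<Longrightarrow> inner_on K (comb_r (\<beta> l)) (comb_r (\<beta> l')) = (if l = l' then 1 else 0)"
  using basis by (simp add: gs_basis_def)

lemma gs_expand_r: "x < M \<Longrightarrow> k \<in> K \<Longrightarrow> r x k = (\<Sum>l<L. inner_on K (r x) (comb_r (\<beta> l)) * comb_r (\<beta> l) k)"
  using basis by (simp add: gs_basis_def)

lemma gs_expand_s: "x < M \<Longrightarrow> j \<in> J \<Longrightarrow> s x j = (\<Sum>l<L. inner_on K (r x) (comb_r (\<beta> l)) * comb_s (\<beta> l) j)"
  using basis by (simp add: gs_basis_def)

lemma comb_r_gs_residual: "comb_r gs_residual k = r M k - (\<Sum>l<L. gs_coeff l * comb_r (\<beta> l) k)"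
  unfolding gs_residual_def by (rule comb_r_unit_minus[OF M_less])

lemma comb_s_gs_residual: "comb_s gs_residual j = s M j - (\<Sum>l<L. gs_coeff l * comb_s (\<beta> l) j)"
  unfolding gs_residual_def by (rule comb_s_unit_minus[OF M_less])

lemma r_M_eq: "r M = (\<lambda>k. comb_r gs_residual k + (\<Sum>l<L. gs_coeff l * comb_r (\<beta> l) k))"
  by (simp add: comb_r_gs_residual)

lemma gs_residual_orthogonal:
  assumes "l < L"
  shows "inner_on K (comb_r gs_residual) (comb_r (\<beta> l)) = 0"
proof -
  have "inner_on K (comb_r gs_residual) (comb_r (\<beta> l))
      = gs_coeff l - (\<Sum>l'<L. gs_coeff l' * inner_on K (comb_r (\<beta> l')) (comb_r (\<beta> l)))"
    unfolding comb_r_gs_residual inner_on_diff_left inner_on_sum_left gs_coeff_def ..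
  also have "(\<Sum>l'<L. gs_coeff l' * inner_on K (comb_r (\<beta> l')) (comb_r (\<beta> l)))
      = (\<Sum>l'<L. if l' = l then gs_coeff l' else 0)"
    using gs_orthonormal assms by (intro sum.cong) auto
  finally show ?thesis using assms by simp
qed

text \<open>If the residual vanishes, \<open>r\<^sub>M\<close> already lies in the span; by the Gram identity so does \<open>s\<^sub>M\<close>.\<close>

lemma gs_basis_Suc_span:
  assumes "inner_on K (comb_r gs_residual) (comb_r gs_residual) = 0"
  shows "gs_basis (Suc M) L \<beta>"
proof -
  have "comb_r gs_residual k = 0" if "k \<in> K" for k
    using inner_on_self_eq_0[OF finite_K assms that] .
  moreover have "comb_s gs_residual j = 0" if "j \<in> J" for j
    using inner_on_self_eq_0[OF finite_J _ that] assms inner_on_comb_s by simp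
  ultimately show ?thesis
    using gs_orthonormal gs_expand_r gs_expand_s comb_r_gs_residual comb_s_gs_residual
    unfolding gs_basis_def by (auto simp: less_Suc_eq gs_coeff_def)
qed

context
  fixes \<nu> :: real
  assumes \<nu>_pos: "\<nu> > 0"
    and \<nu>_sq: "inner_on K (comb_r gs_residual) (comb_r gs_residual) = of_real \<nu> * of_real \<nu>"
begin

definition gs_next :: "nat \<Rightarrow> nat \<Rightarrow> complex" where
  "gs_next = \<beta>(L := (\<lambda>x. gs_residual x / of_real \<nu>))"

lemma gs_next_less: "l < L \<Longrightarrow> gs_next l = \<beta> l"
  by (simp add: gs_next_def)

lemma comb_r_gs_next: "comb_r (gs_next L) = (\<lambda>k. comb_r gs_residual k / of_real \<nu>)"
  by (simp add: gs_next_def comb_r_div)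

lemma comb_s_gs_next: "comb_s (gs_next L) = (\<lambda>j. comb_s gs_residual j / of_real \<nu>)"
  by (simp add: gs_next_def comb_s_div)

lemma gs_next_orthonormal:
  assumes "l < Suc L" "l' < Suc L"
  shows "inner_on K (comb_r (gs_next l)) (comb_r (gs_next l')) = (if l = l' then 1 else 0)"
proof -
  have LL: "inner_on K (comb_r (gs_next L)) (comb_r (gs_next L)) = 1"
    unfolding comb_r_gs_next inner_on_div_left inner_on_div_right \<nu>_sq using \<nu>_pos by simp
  have lL: "inner_on K (comb_r (gs_next l)) (comb_r (gs_next L)) = 0" if "l < L" for l
    using gs_residual_orthogonal[OF that] unfolding comb_r_gs_next gs_next_less[OF that]
    by (subst inner_on_commute) (simp add: inner_on_div_left)
  have Ll: "inner_on K (comb_r (gs_next L)) (comb_r (gs_next l)) = 0" if "l < L" for l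
    using lL[OF that] by (subst inner_on_commute) simp
  show ?thesis using assms gs_orthonormal gs_next_less LL lL Ll by (auto simp: less_Suc_eq)
qed

lemma inner_on_r_gs_next:
  assumes "x \<le> M"
  shows "inner_on K (r x) (comb_r (gs_next L)) = (if x = M then of_real \<nu> else 0)"
proof -
  have old: "inner_on K (comb_r (\<beta> l)) (comb_r (gs_next L)) = 0" if "l < L" for l
    using gs_next_orthonormal[of l L] that gs_next_less by simp
  show ?thesis
  proof (cases "x = M")
    case True
    have "inner_on K (r M) (comb_r (gs_next L))
        = inner_on K (comb_r gs_residual) (comb_r (gs_next L))
          + (\<Sum>l<L. gs_coeff l * inner_on K (comb_r (\<beta> l)) (comb_r (gs_next L)))"
      unfolding r_M_eq inner_on_add_left inner_on_sum_left ..
    also have "\<dots> = of_real \<nu>"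
      using old \<nu>_pos unfolding comb_r_gs_next inner_on_div_right \<nu>_sq by simp
    finally show ?thesis using True by simp
  next
    case False
    then have "inner_on K (r x) (comb_r (gs_next L))
        = (\<Sum>l<L. inner_on K (r x) (comb_r (\<beta> l)) * inner_on K (comb_r (\<beta> l)) (comb_r (gs_next L)))"
      using assms gs_expand_r by (subst inner_on_sum_left[symmetric]) (auto intro!: inner_on_cong)
    then show ?thesis using old False by simp
  qed
qed

lemma gs_basis_Suc_new: "gs_basis (Suc M) (Suc L) gs_next"
  unfolding gs_basis_def
proof (intro conjI allI impI ballI gs_next_orthonormal)
  fix x k assume "x < Suc M" "k \<in> K"
  then show "r x k = (\<Sum>l<Suc L. inner_on K (r x) (comb_r (gs_next l)) * comb_r (gs_next l) k)"
    using gs_expand_r comb_r_gs_residual inner_on_r_gs_next[of x] gs_next_less comb_r_gs_next \<nu>_pos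
    by (auto simp: less_Suc_eq gs_coeff_def)
next
  fix x j assume "x < Suc M" "j \<in> J"
  then show "s x j = (\<Sum>l<Suc L. inner_on K (r x) (comb_r (gs_next l)) * comb_s (gs_next l) j)"
    using gs_expand_s comb_s_gs_residual inner_on_r_gs_next[of x] gs_next_less comb_s_gs_next \<nu>_pos
    by (auto simp: less_Suc_eq gs_coeff_def)
qed

end

end

lemma gs_basis_Suc:
  assumes "M < N" and basis: "gs_basis M L \<beta>"
  shows "\<exists>L' \<beta>'. gs_basis (Suc M) L' \<beta>'"
proof (cases "inner_on K (comb_r (gs_residual M L \<beta>)) (comb_r (gs_residual M L \<beta>)) = 0")
  case True
  then show ?thesis using gs_basis_Suc_span[OF assms] by blast
next
  case False
  define q where "q = (\<Sum>k\<in>K. (cmod (comb_r (gs_residual M L \<beta>) k))^2)"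
  have q: "inner_on K (comb_r (gs_residual M L \<beta>)) (comb_r (gs_residual M L \<beta>)) = of_real q"
    unfolding q_def by (rule inner_on_self)
  then have "q \<noteq> 0" using False by auto
  then have "q > 0" unfolding q_def by (simp add: sum_nonneg less_le)
  then have "of_real (sqrt q) * of_real (sqrt q) = (of_real q :: complex)" by (simp flip: of_real_mult)
  then show ?thesis using gs_basis_Suc_new[OF assms, of "sqrt q"] q \<open>q > 0\<close> by auto
qed

lemma gs_basis_exists: "M \<le> N \<Longrightarrow> \<exists>L \<beta>. gs_basis M L \<beta>"
proof (induction M)
  case 0
  show ?case by (auto simp: gs_basis_def)
next
  case (Suc M)
  then show ?case using gs_basis_Suc[of M] by auto
qed

lemma contraction_exists:
  obtains T where "\<And>x j. x < N \<Longrightarrow> j \<in> J \<Longrightarrow> s x j = (\<Sum>k\<in>K. T j k * r x k)"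
    and "\<And>u. (\<Sum>j\<in>J. (cmod (\<Sum>k\<in>K. T j k * u k))^2) \<le> (\<Sum>k\<in>K. (cmod (u k))^2)"
proof -
  obtain L \<beta> where basis: "gs_basis N L \<beta>" using gs_basis_exists by blast
  define e where "e l = comb_r (\<beta> l)" for l
  define f where "f l = comb_s (\<beta> l)" for l
  have on_e: "\<And>l l'. l < L \<Longrightarrow> l' < L \<Longrightarrow> inner_on K (e l) (e l') = (if l = l' then 1 else 0)"
    using basis by (simp add: gs_basis_def e_def)
  have on_f: "\<And>l l'. l < L \<Longrightarrow> l' < L \<Longrightarrow> inner_on J (f l) (f l') = (if l = l' then 1 else 0)"
    using on_e by (simp add: e_def f_def inner_on_comb_s)
  define T where "T j k = (\<Sum>l<L. f l j * cnj (e l k))" for j k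
  have T_apply: "(\<Sum>k\<in>K. T j k * u k) = (\<Sum>l<L. inner_on K u (e l) * f l j)" for j u
    unfolding T_def inner_on_def sum_distrib_right sum_distrib_left
    by (subst sum.swap) (simp add: mult_ac)
  show ?thesis
  proof
    fix x j assume "x < N" "j \<in> J"
    then show "s x j = (\<Sum>k\<in>K. T j k * r x k)"
      using basis unfolding T_apply gs_basis_def e_def f_def by blast
  next
    fix u
    have "(\<Sum>j\<in>J. (cmod (\<Sum>k\<in>K. T j k * u k))^2)
        = Re (inner_on J (\<lambda>j. \<Sum>l<L. inner_on K u (e l) * f l j) (\<lambda>j. \<Sum>l<L. inner_on K u (e l) * f l j))"
      unfolding inner_on_self Re_complex_of_real T_apply ..
    also have "\<dots> = Re (\<Sum>l<L. inner_on K u (e l) * cnj (inner_on K u (e l)))"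
      by (subst inner_on_orthonormal_comb[OF on_f]) auto
    also have "\<dots> \<le> Re (inner_on K u u)" by (rule bessel_inequality[OF on_e])
    finally show "(\<Sum>j\<in>J. (cmod (\<Sum>k\<in>K. T j k * u k))^2) \<le> (\<Sum>k\<in>K. (cmod (u k))^2)"
      unfolding inner_on_self by simp
  qed
qed

end

section \<open>Index arithmetic, tensor products and partial traces\<close>

text \<open>An index \<open>i < A * M\<close> of \<open>\<complex>\<^sup>A \<otimes> \<complex>\<^sup>M\<close> is the pair \<open>(i div M, i mod M)\<close>.\<close>

lemma sum_lessThan_mult: "(\<Sum>i<(A::nat)*M. g i) = (\<Sum>a<A. \<Sum>c<M. g (a*M + c))"
proof -
  have "(\<Sum>i<A*M. g i) = (\<Sum>a<A. sum g {a*M..<a*M+M})" by (rule sum.nat_group[symmetric])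
  also have "\<dots> = (\<Sum>a<A. \<Sum>c<M. g (a*M + c))"
  proof (rule sum.cong[OF refl])
    fix a
    have "sum g {0 + a*M..<M + a*M} = (\<Sum>c\<in>{0..<M}. g (c + a*M))" by (rule sum.shift_bounds_nat_ivl)
    then show "sum g {a*M..<a*M+M} = (\<Sum>c<M. g (a*M + c))" by (simp add: atLeast0LessThan add.commute)
  qed
  finally show ?thesis .
qed

lemma pair_index_less: "a < A \<Longrightarrow> c < M \<Longrightarrow> a*M + c < A*(M::nat)"
proof -
  assume "a < A" "c < M"
  then have "a*M + c < Suc a * M" by simp
  also have "\<dots> \<le> A * M" using \<open>a < A\<close> by (intro mult_right_mono) auto
  finally show ?thesis .
qed

lemma pair_index_div: "c < (M::nat) \<Longrightarrow> (a*M + c) div M = a"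
  by simp

lemma pair_index_mod: "c < (M::nat) \<Longrightarrow> (a*M + c) mod M = c"
  by simp

lemma triple_index_less: "a < A \<Longrightarrow> b < B \<Longrightarrow> c < M \<Longrightarrow> (a*B + b)*M + c < A*B*(M::nat)"
  by (intro pair_index_less) auto

lemma mod_less_of_less_mult: "i < A * M \<Longrightarrow> i mod M < (M::nat)"
  by (cases "M = 0") auto

lemma tensor_mat_carrier: "tensor_mat A M X Y \<in> carrier_mat (A*M) (A*M)"
  by (simp add: tensor_mat_def)

lemma sesq_form_tensor_one:
  assumes "\<sigma> \<in> carrier_mat M M"
  shows "sesq_form (A*M) (tensor_mat A M (1\<^sub>m A) \<sigma>) u w
    = (\<Sum>a<A. sesq_form M \<sigma> (\<lambda>c. u (a*M+c)) (\<lambda>c. w (a*M+c)))"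
proof -
  have "sesq_form (A*M) (tensor_mat A M (1\<^sub>m A) \<sigma>) u w
      = (\<Sum>a<A. \<Sum>c<M. \<Sum>a'<A. \<Sum>c'<M.
           cnj (u (a*M+c)) * ((if a = a' then 1 else 0) * \<sigma> $$ (c, c')) * w (a'*M+c'))"
    unfolding sesq_form_def sum_lessThan_mult tensor_mat_def
    by (intro sum.cong refl) (simp add: pair_index_less)
  also have "\<dots> = (\<Sum>a<A. \<Sum>c<M. \<Sum>a'<A.
      if a' = a then (\<Sum>c'<M. cnj (u (a*M+c)) * \<sigma> $$ (c, c') * w (a*M+c')) else 0)"
    by (intro sum.cong refl) auto
  also have "\<dots> = (\<Sum>a<A. sesq_form M \<sigma> (\<lambda>c. u (a*M+c)) (\<lambda>c. w (a*M+c)))"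
    unfolding sesq_form_def by simp
  finally show ?thesis .
qed

lemma ptrace_right_ket_bra_entry:
  assumes "\<psi> \<in> carrier_vec (n*M)" "i < n" "j < n"
  shows "ptrace_right n M (ket_bra \<psi>) $$ (i,j) = (\<Sum>k<M. \<psi> $ (i*M+k) * cnj (\<psi> $ (j*M+k)))"
  using assms unfolding ptrace_right_def ket_bra_def by (simp add: pair_index_less)

text \<open>\<open>mid_slice B M \<psi> b\<close> is the vector on \<open>AC\<close> obtained by fixing the middle index of \<open>\<psi> \<in> ABC\<close> to \<open>b\<close>;
  tracing out \<open>B\<close> from \<open>|\<psi>\<rangle>\<langle>\<psi>|\<close> gives \<open>\<Sum>\<^sub>b |\<psi>\<^sub>b\<rangle>\<langle>\<psi>\<^sub>b|\<close>.\<close>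

definition mid_slice :: "nat \<Rightarrow> nat \<Rightarrow> complex vec \<Rightarrow> nat \<Rightarrow> nat \<Rightarrow> complex" where
  "mid_slice B M \<psi> b i = \<psi> $ (((i div M)*B + b)*M + i mod M)"

lemma ptrace_mid_carrier: "ptrace_mid A B M X \<in> carrier_mat (A*M) (A*M)"
  by (simp add: ptrace_mid_def)

lemma ptrace_mid_ket_bra_entry:
  assumes "\<psi> \<in> carrier_vec (A*B*M)" "i < A*M" "j < A*M"
  shows "ptrace_mid A B M (ket_bra \<psi>) $$ (i,j) = (\<Sum>b<B. mid_slice B M \<psi> b i * cnj (mid_slice B M \<psi> b j))"
proof -
  have "((i div M)*B + b)*M + i mod M < A*B*M" "((j div M)*B + b)*M + j mod M < A*B*M" if "b < B" for b
    using assms(2,3) that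
    by (auto intro!: triple_index_less less_mult_imp_div_less mod_less_of_less_mult)
  then show ?thesis using assms unfolding ptrace_mid_def ket_bra_def mid_slice_def by simp
qed

lemma sesq_form_ptrace_mid_ket_bra:
  assumes "\<psi> \<in> carrier_vec (A*B*M)"
  shows "sesq_form (A*M) (ptrace_mid A B M (ket_bra \<psi>)) u v =
    (\<Sum>b<B. (\<Sum>i<A*M. cnj (u i) * mid_slice B M \<psi> b i) * cnj (\<Sum>j<A*M. cnj (v j) * mid_slice B M \<psi> b j))"
  by (rule sesq_form_gram[OF ptrace_mid_carrier ptrace_mid_ket_bra_entry[OF assms]])

lemma purification_carrier: "purification dA dB X dC \<psi> \<Longrightarrow> \<psi> \<in> carrier_vec (dA*dB*dC)"
  by (simp add: purification_def)

lemma purification_gram: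
  assumes "purification dA dB X m \<psi>" "x < dA*dB" "y < dA*dB"
  shows "inner_on {..<m} (\<lambda>c. \<psi> $ (x*m + c)) (\<lambda>c. \<psi> $ (y*m + c)) = X $$ (x, y)"
  using assms ptrace_right_ket_bra_entry[OF purification_carrier[OF assms(1)] assms(2,3)]
  by (simp add: inner_on_def purification_def)

text \<open>A Gram factorisation \<open>X\<^sub>i\<^sub>j = \<Sum>\<^sub>k c\<^sub>k\<^sub>i \<overline>c\<^sub>k\<^sub>j\<close> is a purification with \<open>\<psi>(i,k) = c\<^sub>k\<^sub>i\<close>.\<close>

lemma purification_exists:
  assumes "psd (dA*dB) X"
  shows "\<exists>\<psi>. purification dA dB X (dA*dB) \<psi>"
proof -
  let ?n = "dA*dB"
  obtain c where c: "\<And>i j. i < ?n \<Longrightarrow> j < ?n \<Longrightarrow> X $$ (i, j) = (\<Sum>k<?n. c k i * cnj (c k j))"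
    using psd_gram_factor[OF assms] by blast
  define \<psi> where "\<psi> = vec (?n*?n) (\<lambda>i. c (i mod ?n) (i div ?n))"
  have car: "\<psi> \<in> carrier_vec (?n*?n)" by (simp add: \<psi>_def)
  have Xc: "X \<in> carrier_mat ?n ?n" using psd_carrier[OF assms] .
  have "ptrace_right ?n ?n (ket_bra \<psi>) = X"
  proof (rule eq_matI)
    fix i j assume "i < dim_row X" "j < dim_col X"
    then have ij: "i < ?n" "j < ?n" using Xc by auto
    have "ptrace_right ?n ?n (ket_bra \<psi>) $$ (i,j) = (\<Sum>k<?n. \<psi> $ (i*?n+k) * cnj (\<psi> $ (j*?n+k)))"
      by (rule ptrace_right_ket_bra_entry[OF car ij])
    also have "\<dots> = (\<Sum>k<?n. c k i * cnj (c k j))"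
      using ij by (intro sum.cong refl) (simp add: \<psi>_def pair_index_less pair_index_div pair_index_mod)
    finally show "ptrace_right ?n ?n (ket_bra \<psi>) $$ (i,j) = X $$ (i,j)" using c[OF ij] by simp
  qed (use Xc in \<open>auto simp: ptrace_right_def\<close>)
  then show ?thesis using car unfolding purification_def by auto
qed

lemma Hmax_eq_purification:
  assumes "psd (dA*dB) X"
  obtains dC \<psi> where "purification dA dB X dC \<psi>"
    and "Hmax dA dB X = - Hmin dA dC (ptrace_mid dA dB dC (ket_bra \<psi>))"
proof -
  define P where "P = (SOME (dC, \<psi>). purification dA dB X dC \<psi>)"
  have "\<exists>q. (case q of (dC, \<psi>) \<Rightarrow> purification dA dB X dC \<psi>)"
    using purification_exists[OF assms] by auto
  then have "case P of (dC, \<psi>) \<Rightarrow> purification dA dB X dC \<psi>" unfolding P_def by (rule someI_ex)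
  moreover have "Hmax dA dB X = (case P of (dC, \<psi>) \<Rightarrow> - Hmin dA dC (ptrace_mid dA dB dC (ket_bra \<psi>)))"
    unfolding Hmax_def P_def by simp
  ultimately show ?thesis using that by (cases P) auto
qed

lemma Hmax_eq_purification_family:
  assumes "\<And>i. i \<in> I \<Longrightarrow> psd (dA*dB) (\<rho> i)"
  obtains n \<phi> where "\<And>i. i \<in> I \<Longrightarrow> purification dA dB (\<rho> i) (n i) (\<phi> i)"
    and "\<And>i. i \<in> I \<Longrightarrow> Hmax dA dB (\<rho> i) = - Hmin dA (n i) (ptrace_mid dA dB (n i) (ket_bra (\<phi> i)))"
proof -
  have "\<forall>i\<in>I. \<exists>q. purification dA dB (\<rho> i) (fst q) (snd q) \<and>
      Hmax dA dB (\<rho> i) = - Hmin dA (fst q) (ptrace_mid dA dB (fst q) (ket_bra (snd q)))"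
  proof
    fix i assume "i \<in> I"
    then obtain dC \<phi> where "purification dA dB (\<rho> i) dC \<phi>"
      and "Hmax dA dB (\<rho> i) = - Hmin dA dC (ptrace_mid dA dB dC (ket_bra \<phi>))"
      using Hmax_eq_purification assms by blast
    then show "\<exists>q. purification dA dB (\<rho> i) (fst q) (snd q) \<and>
        Hmax dA dB (\<rho> i) = - Hmin dA (fst q) (ptrace_mid dA dB (fst q) (ket_bra (snd q)))"
      by (intro exI[of _ "(dC, \<phi>)"]) simp
  qed
  from bchoice[OF this] obtain q where "\<forall>i\<in>I. purification dA dB (\<rho> i) (fst (q i)) (snd (q i)) \<and>
      Hmax dA dB (\<rho> i) = - Hmin dA (fst (q i)) (ptrace_mid dA dB (fst (q i)) (ket_bra (snd (q i))))"
    by blast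
  then show ?thesis using that[of "fst \<circ> q" "snd \<circ> q"] by simp
qed

lemma mtrace_carrier: "X \<in> carrier_mat n n \<Longrightarrow> mtrace X = (\<Sum>i<n. X $$ (i,i))"
  by (simp add: mtrace_def)

lemma mtrace_minus:
  assumes "X \<in> carrier_mat n n" "Y \<in> carrier_mat n n"
  shows "mtrace (X - Y) = mtrace X - mtrace Y"
proof -
  have "mtrace (X - Y) = (\<Sum>i<n. X $$ (i,i) - Y $$ (i,i))"
    using assms by (simp add: mtrace_carrier[OF minus_carrier_mat[OF assms(2)]])
  then show ?thesis using assms by (simp add: mtrace_carrier sum_subtractf)
qed

lemma mtrace_smult:
  assumes "X \<in> carrier_mat n n"
  shows "mtrace (a \<cdot>\<^sub>m X) = a * mtrace X"
proof -
  have "mtrace (a \<cdot>\<^sub>m X) = (\<Sum>i<n. a * X $$ (i,i))"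
    using assms by (simp add: mtrace_carrier[OF smult_carrier_mat[OF assms]])
  then show ?thesis using assms by (simp add: mtrace_carrier sum_distrib_left)
qed

lemma mtrace_one: "mtrace (1\<^sub>m n) = (of_nat n :: complex)"
proof -
  have "mtrace (1\<^sub>m n) = (\<Sum>i<n. (1::complex))" unfolding mtrace_def by (intro sum.cong) auto
  then show ?thesis by simp
qed

lemma mtrace_tensor_one:
  assumes "\<sigma> \<in> carrier_mat M M"
  shows "mtrace (tensor_mat A M (1\<^sub>m A) \<sigma>) = of_nat A * mtrace \<sigma>"
proof -
  have "mtrace (tensor_mat A M (1\<^sub>m A) \<sigma>) = (\<Sum>a<A. \<Sum>c<M. tensor_mat A M (1\<^sub>m A) \<sigma> $$ (a*M+c,a*M+c))"
    by (simp add: mtrace_carrier[OF tensor_mat_carrier] sum_lessThan_mult)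
  also have "\<dots> = (\<Sum>a<A. \<Sum>c<M. \<sigma> $$ (c,c))"
    by (intro sum.cong refl) (simp add: tensor_mat_def pair_index_less)
  finally show ?thesis using assms by (simp add: mtrace_carrier)
qed

lemma psd_mtrace_nonneg: "psd n X \<Longrightarrow> 0 \<le> mtrace X"
  unfolding mtrace_carrier[OF psd_carrier] by (intro sum_nonneg) (simp add: psd_diag_nonneg)

lemma psd_mtrace_real: "psd n X \<Longrightarrow> mtrace X = of_real (Re (mtrace X))"
  using psd_mtrace_nonneg by (auto simp: less_eq_complex_def complex_eq_iff)

lemma mtrace_ptrace_mid_purification:
  assumes "purification dA dB X dC \<psi>"
  shows "mtrace (ptrace_mid dA dB dC (ket_bra \<psi>)) = mtrace X"
proof -
  have car: "\<psi> \<in> carrier_vec (dA*dB*dC)" using purification_carrier[OF assms] .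
  let ?w = "\<lambda>a b k. \<psi> $ ((a*dB+b)*dC+k) * cnj (\<psi> $ ((a*dB+b)*dC+k))"
  have "mtrace (ptrace_mid dA dB dC (ket_bra \<psi>)) = (\<Sum>a<dA. \<Sum>k<dC. \<Sum>b<dB. ?w a b k)"
    by (simp add: mtrace_carrier[OF ptrace_mid_carrier] ptrace_mid_ket_bra_entry[OF car]
        sum_lessThan_mult mid_slice_def pair_index_less)
  also have "\<dots> = (\<Sum>a<dA. \<Sum>b<dB. \<Sum>k<dC. ?w a b k)"
    by (rule sum.cong[OF refl], rule sum.swap)
  also have "\<dots> = (\<Sum>x<dA*dB. \<Sum>k<dC. \<psi> $ (x*dC+k) * cnj (\<psi> $ (x*dC+k)))"
    by (rule sum_lessThan_mult[symmetric])
  also have "\<dots> = mtrace (ptrace_right (dA*dB) dC (ket_bra \<psi>))"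
    unfolding mtrace_def using ptrace_right_ket_bra_entry[OF car] by (simp add: ptrace_right_def)
  finally show ?thesis using assms by (simp add: purification_def)
qed

section \<open>The feasible set of the min-entropy\<close>

definition Hmin_feasible :: "nat \<Rightarrow> nat \<Rightarrow> complex mat \<Rightarrow> real set" where
  "Hmin_feasible dA dC \<omega> = {lam. \<exists>sigma. norm_state dC sigma \<and>
       loewner_ge (dA * dC) (complex_of_real (2 powr (- lam)) \<cdot>\<^sub>m tensor_mat dA dC (1\<^sub>m dA) sigma) \<omega>}"

lemma Hmin_eq_Sup_feasible: "Hmin dA dC \<omega> = Sup (Hmin_feasible dA dC \<omega>)"
  by (simp add: Hmin_def Hmin_feasible_def)

lemma Hmin_feasible_trace_bound:
  assumes "\<omega> \<in> carrier_mat (dA*dC) (dA*dC)" "lam \<in> Hmin_feasible dA dC \<omega>"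
  shows "Re (mtrace \<omega>) \<le> 2 powr (- lam) * dA"
proof -
  obtain \<sigma> where ns: "norm_state dC \<sigma>" and
    "loewner_ge (dA*dC) (complex_of_real (2 powr (- lam)) \<cdot>\<^sub>m tensor_mat dA dC (1\<^sub>m dA) \<sigma>) \<omega>"
    using assms(2) unfolding Hmin_feasible_def by blast
  then have p: "psd (dA*dC) (complex_of_real (2 powr (- lam)) \<cdot>\<^sub>m tensor_mat dA dC (1\<^sub>m dA) \<sigma> - \<omega>)"
    unfolding loewner_ge_def by blast
  have sc: "\<sigma> \<in> carrier_mat dC dC" using ns psd_carrier unfolding norm_state_def by blast
  have "mtrace (complex_of_real (2 powr (- lam)) \<cdot>\<^sub>m tensor_mat dA dC (1\<^sub>m dA) \<sigma> - \<omega>)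
      = complex_of_real (2 powr (- lam)) * of_nat dA - mtrace \<omega>"
    using ns
    by (simp add: mtrace_minus[OF smult_carrier_mat[OF tensor_mat_carrier] assms(1)]
        mtrace_smult[OF tensor_mat_carrier] mtrace_tensor_one[OF sc] norm_state_def)
  with psd_mtrace_nonneg[OF p] show ?thesis by (simp add: less_eq_complex_def)
qed

lemma bdd_above_Hmin_feasible:
  assumes "\<omega> \<in> carrier_mat (dA*dC) (dA*dC)" "Re (mtrace \<omega>) > 0"
  shows "bdd_above (Hmin_feasible dA dC \<omega>)"
proof (rule bdd_aboveI)
  fix lam assume lam: "lam \<in> Hmin_feasible dA dC \<omega>"
  define t where "t = Re (mtrace \<omega>)"
  have b: "t \<le> 2 powr (- lam) * dA" using Hmin_feasible_trace_bound[OF assms(1) lam] t_def by simp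
  have dA: "real dA > 0" using b assms(2) t_def by (cases "dA = 0") auto
  have "t / dA \<le> 2 powr (- lam)" using b dA by (simp add: field_simps)
  then have "log 2 (t / dA) \<le> log 2 (2 powr (- lam))"
    using assms(2) dA t_def by (subst log_le_cancel_iff) auto
  then show "lam \<le> - log 2 (t / dA)" by simp
qed

lemma Hmin_feasible_le_Hmin:
  assumes "\<omega> \<in> carrier_mat (dA*dC) (dA*dC)" "Re (mtrace \<omega>) > 0" "lam \<in> Hmin_feasible dA dC \<omega>"
  shows "lam \<le> Hmin dA dC \<omega>"
  unfolding Hmin_eq_Sup_feasible by (rule cSup_upper[OF assms(3) bdd_above_Hmin_feasible[OF assms(1,2)]])

lemma norm_state_maximally_mixed:
  assumes "M > 0"
  shows "norm_state M (complex_of_real (1 / real M) \<cdot>\<^sub>m 1\<^sub>m M)"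
  unfolding norm_state_def psd_iff_quad_form
proof (intro conjI allI)
  fix v
  have "quad_form M (complex_of_real (1 / real M) \<cdot>\<^sub>m 1\<^sub>m M) v
      = of_real (1 / real M * (\<Sum>i<M. (cmod (v i))^2))"
    by (simp add: sesq_form_smult sesq_form_one sum_cnj_mult_self)
  then show "0 \<le> quad_form M (complex_of_real (1 / real M) \<cdot>\<^sub>m 1\<^sub>m M) v"
    by (simp add: less_eq_complex_def sum_nonneg)
qed (use assms in \<open>simp_all add: mtrace_smult[of _ M] mtrace_one\<close>)

lemma quad_form_tensor_maximally_mixed:
  "quad_form (A*M) (tensor_mat A M (1\<^sub>m A) (complex_of_real (1 / real M) \<cdot>\<^sub>m 1\<^sub>m M)) u
    = of_real ((\<Sum>i<A*M. (cmod (u i))^2) / real M)"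
proof -
  have "quad_form (A*M) (tensor_mat A M (1\<^sub>m A) (complex_of_real (1 / real M) \<cdot>\<^sub>m 1\<^sub>m M)) u
      = of_real (1 / real M) * (\<Sum>a<A. \<Sum>c<M. cnj (u (a*M+c)) * u (a*M+c))"
    by (simp add: sesq_form_tensor_one sesq_form_smult sesq_form_one sum_distrib_left)
  also have "\<dots> = of_real (1 / real M) * (\<Sum>i<A*M. cnj (u i) * u i)"
    by (simp only: sum_lessThan_mult)
  also have "\<dots> = of_real (1 / real M) * of_real (\<Sum>i<A*M. (cmod (u i))^2)"
    by (simp only: sum_cnj_mult_self)
  finally show ?thesis by simp
qed

text \<open>A crude bound \<open>\<omega> \<le> B (A M Q)\<^sup>2 1\<close> with \<open>Q = \<Sum> |\<psi>\<^sub>i|\<close>, via Cauchy--Schwarz in the form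
  \<open>|\<langle>u, \<psi>\<^sub>b\<rangle>| \<le> A M Q \<parallel>u\<parallel>\<close>.\<close>

lemma quad_form_ptrace_mid_ket_bra_le:
  assumes psi: "\<psi> \<in> carrier_vec (A*B*M)"
  defines "Q \<equiv> (\<Sum>i<A*B*M. cmod (\<psi> $ i))"
  shows "quad_form (A*M) (ptrace_mid A B M (ket_bra \<psi>)) u
    \<le> of_real (real B * (real A * real M * Q)^2 * (\<Sum>i<A*M. (cmod (u i))^2))"
proof -
  define U where "U = (\<Sum>i<A*M. (cmod (u i))^2)"
  define z where "z b = (\<Sum>i<A*M. cnj (u i) * mid_slice B M \<psi> b i)" for b
  have U0: "U \<ge> 0" unfolding U_def by (simp add: sum_nonneg)
  have Q0: "Q \<ge> 0" unfolding Q_def by (simp add: sum_nonneg)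
  have quad: "quad_form (A*M) (ptrace_mid A B M (ket_bra \<psi>)) u = of_real (\<Sum>b<B. (cmod (z b))^2)"
    unfolding sesq_form_ptrace_mid_ket_bra[OF psi] z_def[symmetric] of_real_sum
    by (rule sum.cong[OF refl]) (metis complex_norm_square)
  have "cmod (z b) \<le> real A * real M * Q * sqrt U" if b: "b < B" for b
  proof -
    have "cmod (z b) \<le> (\<Sum>i<A*M. cmod (u i) * cmod (mid_slice B M \<psi> b i))"
      unfolding z_def by (rule order.trans[OF norm_sum]) (simp add: norm_mult)
    also have "\<dots> \<le> (\<Sum>i<A*M. sqrt U * Q)"
    proof (rule sum_mono)
      fix i assume i: "i \<in> {..<A*M}"
      have "(cmod (u i))^2 \<le> U" unfolding U_def using i by (intro member_le_sum) auto
      then have "cmod (u i) \<le> sqrt U" by (simp add: real_le_rsqrt)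
      moreover have "((i div M)*B + b)*M + i mod M < A*B*M"
        using i b by (auto intro!: triple_index_less less_mult_imp_div_less mod_less_of_less_mult)
      then have "cmod (mid_slice B M \<psi> b i) \<le> Q"
        unfolding mid_slice_def Q_def by (intro member_le_sum) auto
      ultimately show "cmod (u i) * cmod (mid_slice B M \<psi> b i) \<le> sqrt U * Q"
        using U0 Q0 by (intro mult_mono) auto
    qed
    finally show ?thesis by (simp add: mult_ac)
  qed
  then have "(cmod (z b))^2 \<le> (real A * real M * Q)^2 * U" if "b < B" for b
    using that power_mono[of "cmod (z b)" "real A * real M * Q * sqrt U" 2] U0
    by (simp add: power_mult_distrib)
  then have "(\<Sum>b<B. (cmod (z b))^2) \<le> real B * ((real A * real M * Q)^2 * U)"
    using sum_bounded_above[of "{..<B}" "\<lambda>b. (cmod (z b))^2"] by simp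
  then show ?thesis unfolding quad U_def by (simp add: less_eq_complex_def mult.assoc)
qed

lemma Hmin_feasible_nonempty:
  assumes psi: "\<psi> \<in> carrier_vec (A*B*M)" and M: "M > 0"
  shows "Hmin_feasible A M (ptrace_mid A B M (ket_bra \<psi>)) \<noteq> {}"
proof -
  define \<omega> where "\<omega> = ptrace_mid A B M (ket_bra \<psi>)"
  define \<sigma> where "\<sigma> = complex_of_real (1 / real M) \<cdot>\<^sub>m (1\<^sub>m M :: complex mat)"
  define Q where "Q = (\<Sum>i<A*B*M. cmod (\<psi> $ i))"
  define C where "C = real M * (real B * (real A * real M * Q)^2 + 1)"
  have Cpos: "C > 0" unfolding C_def using M by (intro mult_pos_pos add_nonneg_pos) auto
  have "loewner_ge (A*M) (complex_of_real C \<cdot>\<^sub>m tensor_mat A M (1\<^sub>m A) \<sigma>) \<omega>"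
    unfolding loewner_ge_def psd_iff_quad_form
  proof (intro conjI allI)
    fix u
    define U where "U = (\<Sum>i<A*M. (cmod (u i))^2)"
    have "quad_form (A*M) (complex_of_real C \<cdot>\<^sub>m tensor_mat A M (1\<^sub>m A) \<sigma> - \<omega>) u
        = of_real (C * (U / real M)) - quad_form (A*M) \<omega> u"
      unfolding \<omega>_def \<sigma>_def U_def
      by (simp only: sesq_form_minus[OF smult_carrier_mat[OF tensor_mat_carrier] ptrace_mid_carrier]
          sesq_form_smult[OF tensor_mat_carrier] quad_form_tensor_maximally_mixed) simp
    moreover have "quad_form (A*M) \<omega> u \<le> of_real (real B * (real A * real M * Q)^2 * U)"
      unfolding \<omega>_def U_def Q_def by (rule quad_form_ptrace_mid_ket_bra_le[OF psi])
    moreover have "real B * (real A * real M * Q)^2 * U \<le> C * (U / real M)"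
      unfolding C_def U_def using M by (simp add: algebra_simps sum_nonneg)
    ultimately show "0 \<le> quad_form (A*M) (complex_of_real C \<cdot>\<^sub>m tensor_mat A M (1\<^sub>m A) \<sigma> - \<omega>) u"
      by (simp add: less_eq_complex_def)
  qed (auto simp: \<omega>_def ptrace_mid_carrier tensor_mat_carrier intro: minus_carrier_mat[OF ptrace_mid_carrier])
  then have "- log 2 C \<in> Hmin_feasible A M \<omega>"
    unfolding Hmin_feasible_def using norm_state_maximally_mixed[OF M] Cpos \<sigma>_def by auto
  then show ?thesis unfolding \<omega>_def by blast
qed

section \<open>Transporting feasible operators along a contraction\<close>

text \<open>\<open>sandwich n m V X = V X V\<^sup>*\<close> for the \<open>n \<times> m\<close> matrix with entries \<open>V d c\<close>;
  \<open>tensor_adj_apply m n V\<close> applies \<open>1 \<otimes> V\<^sup>*\<close> to a vector on \<open>\<complex>\<^sup>A \<otimes> \<complex>\<^sup>n\<close>.\<close>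

definition sandwich :: "nat \<Rightarrow> nat \<Rightarrow> (nat \<Rightarrow> nat \<Rightarrow> complex) \<Rightarrow> complex mat \<Rightarrow> complex mat" where
  "sandwich n m V X = mat n n (\<lambda>(d,d'). \<Sum>c<m. \<Sum>c'<m. V d c * X $$ (c, c') * cnj (V d' c'))"

definition tensor_adj_apply :: "nat \<Rightarrow> nat \<Rightarrow> (nat \<Rightarrow> nat \<Rightarrow> complex) \<Rightarrow> (nat \<Rightarrow> complex) \<Rightarrow> nat \<Rightarrow> complex" where
  "tensor_adj_apply m n V v x = (\<Sum>d<n. cnj (V d (x mod m)) * v ((x div m)*n + d))"

lemma sandwich_carrier: "sandwich n m V X \<in> carrier_mat n n"
  by (simp add: sandwich_def)

lemma quad_form_sandwich:
  "quad_form n (sandwich n m V X) w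
    = quad_form m X (\<lambda>c. \<Sum>d<n. cnj (V d c) * w d)"
proof -
  have "quad_form n (sandwich n m V X) w
      = (\<Sum>d<n. \<Sum>d'<n. \<Sum>c<m. \<Sum>c'<m. cnj (w d) * V d c * X $$ (c, c') * (cnj (V d' c') * w d'))"
    unfolding sesq_form_def sandwich_def by (simp add: sum_distrib_left sum_distrib_right mult_ac)
  also have "\<dots> = (\<Sum>c<m. \<Sum>c'<m. \<Sum>d<n. \<Sum>d'<n. cnj (w d) * V d c * X $$ (c, c') * (cnj (V d' c') * w d'))"
    by (subst sum.swap, subst (2) sum.swap, subst (3) sum.swap, subst (2) sum.swap) (rule refl)
  also have "\<dots> = quad_form m X (\<lambda>c. \<Sum>d<n. cnj (V d c) * w d)"
    unfolding sesq_form_def by (simp add: sum_distrib_left sum_distrib_right mult_ac)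
  finally show ?thesis .
qed

lemma psd_sandwich: "psd m X \<Longrightarrow> psd n (sandwich n m V X)"
  unfolding psd_iff_quad_form quad_form_sandwich by (simp add: sandwich_carrier)

lemma smult_smult_mat: "a \<cdot>\<^sub>m (b \<cdot>\<^sub>m X) = (a * b :: 'a :: semigroup_mult) \<cdot>\<^sub>m X"
  by (rule eq_matI) (auto simp: mult.assoc)

lemma tensor_mat_smult_right:
  "Y \<in> carrier_mat n n \<Longrightarrow> tensor_mat A n X (a \<cdot>\<^sub>m Y) = a \<cdot>\<^sub>m tensor_mat A n X Y"
  by (rule eq_matI) (auto simp: tensor_mat_def mod_less_of_less_mult)

lemma quad_form_tensor_sandwich:
  assumes "\<sigma> \<in> carrier_mat m m"
  shows "quad_form (A*n) (tensor_mat A n (1\<^sub>m A) (sandwich n m V \<sigma>)) v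
    = quad_form (A*m) (tensor_mat A m (1\<^sub>m A) \<sigma>) (tensor_adj_apply m n V v)"
proof -
  have "quad_form (A*n) (tensor_mat A n (1\<^sub>m A) (sandwich n m V \<sigma>)) v
      = (\<Sum>a<A. quad_form m \<sigma> (\<lambda>c. \<Sum>d<n. cnj (V d c) * v (a*n+d)))"
    by (simp add: sesq_form_tensor_one[OF sandwich_carrier] quad_form_sandwich)
  also have "\<dots> = (\<Sum>a<A. quad_form m \<sigma> (\<lambda>c. tensor_adj_apply m n V v (a*m+c)))"
    by (intro sum.cong refl sesq_form_cong) (simp_all add: tensor_adj_apply_def)
  finally show ?thesis by (simp add: sesq_form_tensor_one[OF assms])
qed

text \<open>If \<open>(1 \<otimes> V) \<psi> = \<surd>p \<phi>\<close> on \<open>AB \<otimes> C\<close>, then the \<open>AC\<close>-marginal of \<open>\<psi>\<close>, seen through \<open>1 \<otimes> V\<^sup>*\<close>,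
  is \<open>p\<close> times the \<open>AC'\<close>-marginal of \<open>\<phi>\<close>.\<close>

lemma quad_form_ptrace_mid_transport:
  assumes psi: "\<psi> \<in> carrier_vec (A*B*m)" and phi: "\<phi> \<in> carrier_vec (A*B*n)" and p: "p \<ge> 0"
    and V: "\<And>x d. x < A*B \<Longrightarrow> d < n \<Longrightarrow> complex_of_real (sqrt p) * \<phi> $ (x*n+d) = (\<Sum>c<m. V d c * \<psi> $ (x*m+c))"
  shows "quad_form (A*m) (ptrace_mid A B m (ket_bra \<psi>)) (tensor_adj_apply m n V v)
    = of_real p * quad_form (A*n) (ptrace_mid A B n (ket_bra \<phi>)) v"
proof -
  define u where "u = tensor_adj_apply m n V v"
  define z where "z b = (\<Sum>x<A*m. cnj (u x) * mid_slice B m \<psi> b x)" for b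
  define z' where "z' b = (\<Sum>y<A*n. cnj (v y) * mid_slice B n \<phi> b y)" for b
  have u: "u (a*m + c) = (\<Sum>d<n. cnj (V d c) * v (a*n + d))" if "c < m" for a c
    unfolding u_def tensor_adj_apply_def using that by simp
  have z: "z b = of_real (sqrt p) * z' b" if b: "b < B" for b
  proof -
    have "z b = (\<Sum>a<A. \<Sum>c<m. \<Sum>d<n. cnj (v (a*n+d)) * (V d c * \<psi> $ ((a*B+b)*m + c)))"
      unfolding z_def sum_lessThan_mult mid_slice_def
      by (intro sum.cong refl) (simp add: u sum_distrib_right sum_distrib_left mult_ac)
    also have "\<dots> = (\<Sum>a<A. \<Sum>d<n. cnj (v (a*n+d)) * (\<Sum>c<m. V d c * \<psi> $ ((a*B+b)*m + c)))"
      by (rule sum.cong[OF refl], subst sum.swap) (simp add: sum_distrib_left)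
    also have "\<dots> = (\<Sum>a<A. \<Sum>d<n. cnj (v (a*n+d)) * (of_real (sqrt p) * \<phi> $ ((a*B+b)*n + d)))"
      using b by (intro sum.cong refl) (simp add: V pair_index_less)
    also have "\<dots> = of_real (sqrt p) * z' b"
      unfolding z'_def sum_lessThan_mult mid_slice_def by (simp add: sum_distrib_left mult_ac)
    finally show ?thesis .
  qed
  have sqrt_p: "of_real (sqrt p) * of_real (sqrt p) = (of_real p :: complex)"
    using p by (simp flip: of_real_mult)
  have "quad_form (A*m) (ptrace_mid A B m (ket_bra \<psi>)) u = (\<Sum>b<B. z b * cnj (z b))"
    unfolding sesq_form_ptrace_mid_ket_bra[OF psi] z_def ..
  also have "\<dots> = (\<Sum>b<B. of_real p * (z' b * cnj (z' b)))"
    using sqrt_p by (intro sum.cong refl) (simp add: z mult_ac)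
  also have "\<dots> = of_real p * quad_form (A*n) (ptrace_mid A B n (ket_bra \<phi>)) v"
    unfolding sesq_form_ptrace_mid_ket_bra[OF phi] z'_def by (simp add: sum_distrib_left)
  finally show ?thesis unfolding u_def .
qed

lemma psd_transport:
  assumes psi: "\<psi> \<in> carrier_vec (A*B*m)" and phi: "\<phi> \<in> carrier_vec (A*B*n)"
    and sc: "\<sigma> \<in> carrier_mat m m" and p: "p > 0"
    and feasible: "psd (A*m) (complex_of_real C \<cdot>\<^sub>m tensor_mat A m (1\<^sub>m A) \<sigma> - ptrace_mid A B m (ket_bra \<psi>))"
    and V: "\<And>x d. x < A*B \<Longrightarrow> d < n \<Longrightarrow> complex_of_real (sqrt p) * \<phi> $ (x*n+d) = (\<Sum>c<m. V d c * \<psi> $ (x*m+c))"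
  shows "psd (A*n) (complex_of_real (C / p) \<cdot>\<^sub>m tensor_mat A n (1\<^sub>m A) (sandwich n m V \<sigma>)
            - ptrace_mid A B n (ket_bra \<phi>))"
  unfolding psd_iff_quad_form
proof (intro conjI allI)
  fix v
  define u where "u = tensor_adj_apply m n V v"
  have "quad_form (A*n) (complex_of_real (C / p) \<cdot>\<^sub>m tensor_mat A n (1\<^sub>m A) (sandwich n m V \<sigma>)
            - ptrace_mid A B n (ket_bra \<phi>)) v
      = of_real (C / p) * quad_form (A*m) (tensor_mat A m (1\<^sub>m A) \<sigma>) u
        - of_real (1 / p) * quad_form (A*m) (ptrace_mid A B m (ket_bra \<psi>)) u"
    using p quad_form_ptrace_mid_transport[OF psi phi less_imp_le[OF p] V, of v, folded u_def]
    by (simp add: u_def sesq_form_minus[OF smult_carrier_mat[OF tensor_mat_carrier] ptrace_mid_carrier]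
        sesq_form_smult[OF tensor_mat_carrier] quad_form_tensor_sandwich[OF sc])
  also have "\<dots> = of_real (1 / p) * quad_form (A*m)
      (complex_of_real C \<cdot>\<^sub>m tensor_mat A m (1\<^sub>m A) \<sigma> - ptrace_mid A B m (ket_bra \<psi>)) u"
    by (simp add: sesq_form_minus[OF smult_carrier_mat[OF tensor_mat_carrier] ptrace_mid_carrier]
        sesq_form_smult[OF tensor_mat_carrier] algebra_simps)
  finally show "0 \<le> quad_form (A*n) (complex_of_real (C / p) \<cdot>\<^sub>m tensor_mat A n (1\<^sub>m A) (sandwich n m V \<sigma>)
            - ptrace_mid A B n (ket_bra \<phi>)) v"
    using psd_quad_form_nonneg[OF feasible, of u] p
    by (simp add: less_eq_complex_def)
qed (auto intro: minus_carrier_mat[OF ptrace_mid_carrier])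

lemma mtrace_sandwich_gram:
  assumes "\<sigma> \<in> carrier_mat m m"
    and "\<And>c c'. c < m \<Longrightarrow> c' < m \<Longrightarrow> \<sigma> $$ (c, c') = (\<Sum>k<m. g k c * cnj (g k c'))"
  shows "mtrace (sandwich n m V \<sigma>) = of_real (\<Sum>d<n. \<Sum>k<m. (cmod (\<Sum>c<m. V d c * g k c))^2)"
proof -
  have "sandwich n m V \<sigma> $$ (d, d) = quad_form m \<sigma> (\<lambda>c. cnj (V d c))" if "d < n" for d
    using that by (simp add: sandwich_def sesq_form_def)
  also have "quad_form m \<sigma> (\<lambda>c. cnj (V d c)) = of_real (\<Sum>k<m. (cmod (\<Sum>c<m. V d c * g k c))^2)" for d
    by (simp only: sesq_form_gram[OF assms] complex_cnj_cnj of_real_sum complex_norm_square)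
  finally show ?thesis by (simp add: mtrace_carrier[OF sandwich_carrier])
qed

lemma mtrace_sandwich_sum_le_1:
  assumes "norm_state m \<sigma>" "finite I"
    and contr: "\<And>u. (\<Sum>i\<in>I. \<Sum>d<n i. (cmod (\<Sum>c<m. V i d c * u c))^2) \<le> (\<Sum>c<m. (cmod (u c))^2)"
  shows "(\<Sum>i\<in>I. Re (mtrace (sandwich (n i) m (V i) \<sigma>))) \<le> 1"
proof -
  have ps: "psd m \<sigma>" and tr: "mtrace \<sigma> = 1" using assms(1) by (auto simp: norm_state_def)
  obtain g where g: "\<And>c c'. c < m \<Longrightarrow> c' < m \<Longrightarrow> \<sigma> $$ (c, c') = (\<Sum>k<m. g k c * cnj (g k c'))"
    using psd_gram_factor[OF ps] by blast
  have "(\<Sum>i\<in>I. Re (mtrace (sandwich (n i) m (V i) \<sigma>)))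
      = (\<Sum>i\<in>I. \<Sum>d<n i. \<Sum>k<m. (cmod (\<Sum>c<m. V i d c * g k c))^2)"
    by (simp add: mtrace_sandwich_gram[OF psd_carrier[OF ps] g])
  also have "\<dots> = (\<Sum>i\<in>I. \<Sum>k<m. \<Sum>d<n i. (cmod (\<Sum>c<m. V i d c * g k c))^2)"
    by (intro sum.cong refl sum.swap)
  also have "\<dots> = (\<Sum>k<m. \<Sum>i\<in>I. \<Sum>d<n i. (cmod (\<Sum>c<m. V i d c * g k c))^2)"
    by (rule sum.swap)
  also have "\<dots> \<le> (\<Sum>k<m. \<Sum>c<m. (cmod (g k c))^2)"
    by (intro sum_mono contr)
  also have "\<dots> = 1"
  proof -
    have "of_real (\<Sum>k<m. \<Sum>c<m. (cmod (g k c))^2) = (\<Sum>k<m. \<Sum>c<m. g k c * cnj (g k c))"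
      by (simp only: of_real_sum complex_norm_square)
    also have "\<dots> = (\<Sum>c<m. \<Sum>k<m. g k c * cnj (g k c))" by (rule sum.swap)
    also have "\<dots> = mtrace \<sigma>" using g by (simp add: mtrace_carrier[OF psd_carrier[OF ps]])
    finally show ?thesis using tr by (simp only: of_real_eq_1_iff)
  qed
  finally show ?thesis .
qed

text \<open>A bound \<open>\<omega> \<le> a (1 \<otimes> S)\<close> with \<open>S \<ge> 0\<close> normalises to the feasible point \<open>S / tr S\<close>.\<close>

lemma Hmin_ge_dominating:
  assumes \<omega>: "\<omega> \<in> carrier_mat (dA*n) (dA*n)" "Re (mtrace \<omega>) > 0"
    and S: "psd n S" and a: "a > 0"
    and dom: "psd (dA*n) (complex_of_real a \<cdot>\<^sub>m tensor_mat dA n (1\<^sub>m dA) S - \<omega>)"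
  shows "Re (mtrace S) > 0" and "- log 2 (a * Re (mtrace S)) \<le> Hmin dA n \<omega>"
proof -
  define t where "t = Re (mtrace S)"
  have Sc: "S \<in> carrier_mat n n" using psd_carrier[OF S] .
  have trS: "mtrace S = of_real t" unfolding t_def by (rule psd_mtrace_real[OF S])
  have "0 \<le> mtrace (complex_of_real a \<cdot>\<^sub>m tensor_mat dA n (1\<^sub>m dA) S - \<omega>)"
    by (rule psd_mtrace_nonneg[OF dom])
  also have "mtrace (complex_of_real a \<cdot>\<^sub>m tensor_mat dA n (1\<^sub>m dA) S - \<omega>)
      = of_real (a * dA * t) - mtrace \<omega>"
    by (simp add: mtrace_minus[OF smult_carrier_mat[OF tensor_mat_carrier] \<omega>(1)]
        mtrace_smult[OF tensor_mat_carrier] mtrace_tensor_one[OF Sc] trS)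
  finally have "Re (mtrace \<omega>) \<le> a * dA * t" by (simp add: less_eq_complex_def)
  then show tpos: "Re (mtrace S) > 0"
    using \<omega>(2) psd_mtrace_nonneg[OF S] t_def by (cases "t = 0") (auto simp: less_eq_complex_def)
  then have tpos': "t > 0" unfolding t_def .
  have "norm_state n (complex_of_real (1 / t) \<cdot>\<^sub>m S)"
    unfolding norm_state_def using psd_smult_nonneg[OF S, of "1 / t"] tpos'
    by (simp add: mtrace_smult[OF Sc] trS flip: of_real_mult)
  moreover have "complex_of_real (2 powr - (- log 2 (a * t))) \<cdot>\<^sub>m
      tensor_mat dA n (1\<^sub>m dA) (complex_of_real (1 / t) \<cdot>\<^sub>m S) = complex_of_real a \<cdot>\<^sub>m tensor_mat dA n (1\<^sub>m dA) S"
  proof -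
    have "a * t * (1 / t) = a" using tpos' by simp
    then have "complex_of_real (a * t) * complex_of_real (1 / t) = complex_of_real a"
      by (metis of_real_mult)
    then show ?thesis using a tpos' by (simp add: tensor_mat_smult_right[OF Sc] smult_smult_mat)
  qed
  ultimately have "- log 2 (a * t) \<in> Hmin_feasible dA n \<omega>"
    unfolding Hmin_feasible_def loewner_ge_def
    using dom \<omega>(1) by (intro CollectI exI[of _ "complex_of_real (1 / t) \<cdot>\<^sub>m S"]) (simp add: tensor_mat_carrier)
  then show "- log 2 (a * Re (mtrace S)) \<le> Hmin dA n \<omega>"
    unfolding t_def by (rule Hmin_feasible_le_Hmin[OF \<omega>])
qed

text \<open>The Gibbs-type inequality \<open>p log\<^sub>2 (p/t) \<ge> (p - t) / ln 2\<close>, from \<open>ln x \<le> x - 1\<close>.\<close>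

lemma weighted_log_ratio_bound:
  fixes p t lam h :: real
  assumes "p > 0" "t > 0" "lam + log 2 (p / t) \<le> h"
  shows "p * lam + (p - t) / ln 2 \<le> p * h"
proof -
  have "ln (t / p) \<le> t / p - 1" using assms by (intro ln_le_minus_one) simp
  then have "p - t \<le> p * (ln p - ln t)" using assms(1,2) by (simp add: ln_div field_simps)
  then have "(p - t) / ln 2 \<le> p * log 2 (p / t)"
    using assms(1,2) by (simp add: log_def ln_div divide_right_mono)
  also have "\<dots> \<le> p * (h - lam)" using assms by (intro mult_left_mono) auto
  finally show ?thesis by (simp add: algebra_simps)
qed

section \<open>Mixtures and their purifications\<close>

lemma psd_mixture:
  assumes "finite I" "\<And>i. i \<in> I \<Longrightarrow> p i \<ge> 0" "\<And>i. i \<in> I \<Longrightarrow> psd n (\<rho> i)"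
  shows "psd n (mat n n (\<lambda>(j, k). \<Sum>i\<in>I. complex_of_real (p i) * \<rho> i $$ (j, k)))"
  unfolding psd_iff_quad_form
proof (intro conjI allI)
  fix v
  have "quad_form n (mat n n (\<lambda>(j, k). \<Sum>i\<in>I. complex_of_real (p i) * \<rho> i $$ (j, k))) v
      = (\<Sum>j<n. \<Sum>k<n. \<Sum>i\<in>I. complex_of_real (p i) * (cnj (v j) * \<rho> i $$ (j, k) * v k))"
    unfolding sesq_form_def by (simp add: sum_distrib_left sum_distrib_right mult_ac)
  also have "\<dots> = (\<Sum>i\<in>I. complex_of_real (p i) * quad_form n (\<rho> i) v)"
    unfolding sesq_form_def sum_distrib_left
    by (subst sum.swap, rule sum.cong[OF refl], rule sum.swap[symmetric])
  also have "0 \<le> \<dots>"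
    using assms(2) psd_quad_form_nonneg[OF assms(3)]
    by (intro sum_nonneg mult_nonneg_nonneg) (auto simp: less_eq_complex_def)
  finally show "0 \<le> quad_form n (mat n n (\<lambda>(j, k). \<Sum>i\<in>I. complex_of_real (p i) * \<rho> i $$ (j, k))) v" .
qed simp

lemma mtrace_mixture:
  assumes "\<And>i. i \<in> I \<Longrightarrow> \<rho> i \<in> carrier_mat n n"
  shows "mtrace (mat n n (\<lambda>(j, k). \<Sum>i\<in>I. complex_of_real (p i) * \<rho> i $$ (j, k)))
    = (\<Sum>i\<in>I. complex_of_real (p i) * mtrace (\<rho> i))"
proof -
  have "mtrace (mat n n (\<lambda>(j, k). \<Sum>i\<in>I. complex_of_real (p i) * \<rho> i $$ (j, k)))
      = (\<Sum>x<n. \<Sum>i\<in>I. complex_of_real (p i) * \<rho> i $$ (x, x))"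
    unfolding mtrace_def by simp
  also have "\<dots> = (\<Sum>i\<in>I. complex_of_real (p i) * (\<Sum>x<n. \<rho> i $$ (x, x)))"
    by (subst sum.swap) (simp add: sum_distrib_left)
  also have "\<dots> = (\<Sum>i\<in>I. complex_of_real (p i) * mtrace (\<rho> i))"
    by (intro sum.cong refl) (simp add: mtrace_carrier[OF assms])
  finally show ?thesis .
qed

lemma mixture_purification_gram:
  assumes fin: "finite I" and p: "\<And>i. i \<in> I \<Longrightarrow> p i \<ge> 0"
    and \<psi>: "purification dA dB (mat (dA * dB) (dA * dB)
              (\<lambda>(j, k). \<Sum>i\<in>I. complex_of_real (p i) * \<rho> i $$ (j, k))) m \<psi>"
    and \<phi>: "\<And>i. i \<in> I \<Longrightarrow> purification dA dB (\<rho> i) (n i) (\<phi> i)"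
    and xy: "x < dA*dB" "y < dA*dB"
  shows "inner_on {..<m} (\<lambda>c. \<psi> $ (x*m + c)) (\<lambda>c. \<psi> $ (y*m + c))
    = inner_on (Sigma I (\<lambda>i. {..<n i}))
        (\<lambda>(i, d). complex_of_real (sqrt (p i)) * \<phi> i $ (x * n i + d))
        (\<lambda>(i, d). complex_of_real (sqrt (p i)) * \<phi> i $ (y * n i + d))"
proof -
  have "inner_on {..<m} (\<lambda>c. \<psi> $ (x*m + c)) (\<lambda>c. \<psi> $ (y*m + c))
      = (\<Sum>i\<in>I. complex_of_real (p i) * \<rho> i $$ (x, y))"
    using purification_gram[OF \<psi> xy] xy by simp
  also have "\<dots> = (\<Sum>i\<in>I. \<Sum>d<n i. complex_of_real (sqrt (p i)) * \<phi> i $ (x * n i + d)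
      * cnj (complex_of_real (sqrt (p i)) * \<phi> i $ (y * n i + d)))"
  proof (rule sum.cong[OF refl])
    fix i assume i: "i \<in> I"
    have sq: "of_real (sqrt (p i)) * of_real (sqrt (p i)) = (of_real (p i) :: complex)"
      using p[OF i] by (simp flip: of_real_mult)
    have "complex_of_real (sqrt (p i)) * \<phi> i $ (x * n i + d) * cnj (complex_of_real (sqrt (p i)) * \<phi> i $ (y * n i + d))
        = of_real (p i) * (\<phi> i $ (x * n i + d) * cnj (\<phi> i $ (y * n i + d)))" for d
      by (simp add: sq[symmetric] mult_ac)
    then have terms: "(\<Sum>d<n i. complex_of_real (sqrt (p i)) * \<phi> i $ (x * n i + d)
          * cnj (complex_of_real (sqrt (p i)) * \<phi> i $ (y * n i + d)))
        = (\<Sum>d<n i. of_real (p i) * (\<phi> i $ (x * n i + d) * cnj (\<phi> i $ (y * n i + d))))"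
      by (rule sum.cong[OF refl])
    show "complex_of_real (p i) * \<rho> i $$ (x, y) = (\<Sum>d<n i. complex_of_real (sqrt (p i)) *
        \<phi> i $ (x * n i + d) * cnj (complex_of_real (sqrt (p i)) * \<phi> i $ (y * n i + d)))"
      by (simp only: purification_gram[OF \<phi>[OF i] xy, symmetric] inner_on_def sum_distrib_left terms)
  qed
  also have "\<dots> = inner_on (Sigma I (\<lambda>i. {..<n i}))
        (\<lambda>(i, d). complex_of_real (sqrt (p i)) * \<phi> i $ (x * n i + d))
        (\<lambda>(i, d). complex_of_real (sqrt (p i)) * \<phi> i $ (y * n i + d))"
    unfolding inner_on_def by (subst sum.Sigma) (use fin in \<open>auto intro!: sum.cong\<close>)
  finally show ?thesis .
qed

lemma mixture_purifications_contraction: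
  assumes fin: "finite I" and p: "\<And>i. i \<in> I \<Longrightarrow> p i \<ge> 0"
    and \<psi>: "purification dA dB (mat (dA * dB) (dA * dB)
              (\<lambda>(j, k). \<Sum>i\<in>I. complex_of_real (p i) * \<rho> i $$ (j, k))) m \<psi>"
    and \<phi>: "\<And>i. i \<in> I \<Longrightarrow> purification dA dB (\<rho> i) (n i) (\<phi> i)"
  obtains V where
    "\<And>i x d. i \<in> I \<Longrightarrow> x < dA*dB \<Longrightarrow> d < n i \<Longrightarrow>
       complex_of_real (sqrt (p i)) * \<phi> i $ (x * n i + d) = (\<Sum>c<m. V i d c * \<psi> $ (x*m + c))"
    and "\<And>u. (\<Sum>i\<in>I. \<Sum>d<n i. (cmod (\<Sum>c<m. V i d c * u c))^2) \<le> (\<Sum>c<m. (cmod (u c))^2)"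
proof -
  let ?n = "dA * dB"
  define J where "J = Sigma I (\<lambda>i. {..<n i})"
  define r where "r x c = \<psi> $ (x*m + c)" for x c
  define s where "s x = (\<lambda>(i, d). complex_of_real (sqrt (p i)) * \<phi> i $ (x * n i + d))" for x
  have gram: "inner_on {..<m} (r x) (r y) = inner_on J (s x) (s y)" if "x < ?n" "y < ?n" for x y
    unfolding r_def s_def J_def by (rule mixture_purification_gram[OF fin p \<psi> \<phi> that])
  interpret equal_gram "{..<m}" J ?n r s
    using fin gram by unfold_locales (auto simp: J_def)
  obtain T where T: "\<And>x j. x < ?n \<Longrightarrow> j \<in> J \<Longrightarrow> s x j = (\<Sum>k\<in>{..<m}. T j k * r x k)"
    and contr: "\<And>u. (\<Sum>j\<in>J. (cmod (\<Sum>k\<in>{..<m}. T j k * u k))^2) \<le> (\<Sum>k\<in>{..<m}. (cmod (u k))^2)"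
    using contraction_exists by blast
  show ?thesis
  proof
    fix i x d assume "i \<in> I" "x < ?n" "d < n i"
    then show "complex_of_real (sqrt (p i)) * \<phi> i $ (x * n i + d) = (\<Sum>c<m. T (i, d) c * \<psi> $ (x*m + c))"
      using T[of x "(i, d)"] by (simp add: J_def s_def r_def)
  next
    fix u
    show "(\<Sum>i\<in>I. \<Sum>d<n i. (cmod (\<Sum>c<m. T (i, d) c * u c))^2) \<le> (\<Sum>c<m. (cmod (u c))^2)"
      using contr[of u] fin by (simp add: J_def sum.Sigma)
  qed
qed

lemma Re_mtrace_mixture_pos:
  assumes "finite I" "\<And>i. i \<in> I \<Longrightarrow> p i \<ge> 0" "(\<Sum>i\<in>I. p i) = 1"
    and "\<And>i. i \<in> I \<Longrightarrow> \<rho> i \<in> carrier_mat n n" "\<And>i. i \<in> I \<Longrightarrow> Re (mtrace (\<rho> i)) > 0"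
  shows "Re (mtrace (mat n n (\<lambda>(j, k). \<Sum>i\<in>I. complex_of_real (p i) * \<rho> i $$ (j, k)))) > 0"
proof -
  have "\<exists>i\<in>I. p i > 0"
  proof (rule ccontr)
    assume "\<not> (\<exists>i\<in>I. p i > 0)"
    then have "\<forall>i\<in>I. p i = 0" using assms(2) by force
    then show False using assms(3) by simp
  qed
  then obtain i0 where i0: "i0 \<in> I" "p i0 > 0" by blast
  have "p i0 * Re (mtrace (\<rho> i0)) \<le> (\<Sum>i\<in>I. p i * Re (mtrace (\<rho> i)))"
    using assms(1,2,5) i0(1) by (intro member_le_sum) (auto intro: mult_nonneg_nonneg less_imp_le)
  moreover have "p i0 * Re (mtrace (\<rho> i0)) > 0" using i0 assms(5) by simp
  ultimately show ?thesis by (simp add: mtrace_mixture[OF assms(4)])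
qed

section \<open>Concavity of the max-entropy\<close>

lemma Hmin_transported_bound:
  assumes \<psi>: "\<psi> \<in> carrier_vec (dA*dB*m)" and \<phi>: "purification dA dB \<rho> n \<phi>" and tr: "Re (mtrace \<rho>) > 0"
    and \<sigma>: "psd m \<sigma>" and p: "p > 0"
    and feasible: "psd (dA*m) (complex_of_real (2 powr (- lam)) \<cdot>\<^sub>m tensor_mat dA m (1\<^sub>m dA) \<sigma>
      - ptrace_mid dA dB m (ket_bra \<psi>))"
    and V: "\<And>x d. x < dA*dB \<Longrightarrow> d < n \<Longrightarrow>
      complex_of_real (sqrt p) * \<phi> $ (x * n + d) = (\<Sum>c<m. V d c * \<psi> $ (x*m + c))"
  shows "p * lam + (p - Re (mtrace (sandwich n m V \<sigma>))) / ln 2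
    \<le> p * Hmin dA n (ptrace_mid dA dB n (ket_bra \<phi>))"
proof -
  define t where "t = Re (mtrace (sandwich n m V \<sigma>))"
  have dom: "psd (dA * n) (complex_of_real (2 powr (- lam) / p) \<cdot>\<^sub>m tensor_mat dA n (1\<^sub>m dA)
      (sandwich n m V \<sigma>) - ptrace_mid dA dB n (ket_bra \<phi>))"
    by (rule psd_transport[OF \<psi> purification_carrier[OF \<phi>] psd_carrier[OF \<sigma>] p feasible V])
  have tr_\<omega>: "Re (mtrace (ptrace_mid dA dB n (ket_bra \<phi>))) > 0"
    using tr by (simp add: mtrace_ptrace_mid_purification[OF \<phi>])
  have "2 powr (- lam) / p > 0" using p by simp
  note bound = Hmin_ge_dominating[OF ptrace_mid_carrier tr_\<omega> psd_sandwich[OF \<sigma>] this dom]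
  have "- log 2 (2 powr (- lam) / p * t) = lam + log 2 (p / t)"
    using p bound(1) by (simp add: t_def log_mult log_divide)
  then show ?thesis
    using bound p by (intro weighted_log_ratio_bound) (simp_all add: t_def)
qed

lemma Hmin_feasible_mixture_le:
  assumes fin: "finite I" and p: "\<And>i. i \<in> I \<Longrightarrow> p i \<ge> 0" and p1: "(\<Sum>i\<in>I. p i) = 1"
    and \<psi>: "purification dA dB (mat (dA * dB) (dA * dB)
              (\<lambda>(j, k). \<Sum>i\<in>I. complex_of_real (p i) * \<rho> i $$ (j, k))) m \<psi>"
    and \<phi>: "\<And>i. i \<in> I \<Longrightarrow> purification dA dB (\<rho> i) (n i) (\<phi> i)"
    and tr: "\<And>i. i \<in> I \<Longrightarrow> Re (mtrace (\<rho> i)) > 0"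
    and lam: "lam \<in> Hmin_feasible dA m (ptrace_mid dA dB m (ket_bra \<psi>))"
  shows "lam \<le> (\<Sum>i\<in>I. p i * Hmin dA (n i) (ptrace_mid dA dB (n i) (ket_bra (\<phi> i))))"
proof -
  define h where "h i = Hmin dA (n i) (ptrace_mid dA dB (n i) (ket_bra (\<phi> i)))" for i
  obtain \<sigma> where \<sigma>: "norm_state m \<sigma>" and feasible: "psd (dA*m)
      (complex_of_real (2 powr (- lam)) \<cdot>\<^sub>m tensor_mat dA m (1\<^sub>m dA) \<sigma> - ptrace_mid dA dB m (ket_bra \<psi>))"
    using lam unfolding Hmin_feasible_def loewner_ge_def by blast
  have \<sigma>_psd: "psd m \<sigma>" using \<sigma> by (simp add: norm_state_def)
  obtain V where V: "\<And>i x d. i \<in> I \<Longrightarrow> x < dA*dB \<Longrightarrow> d < n i \<Longrightarrow>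
       complex_of_real (sqrt (p i)) * \<phi> i $ (x * n i + d) = (\<Sum>c<m. V i d c * \<psi> $ (x*m + c))"
    and contr: "\<And>u. (\<Sum>i\<in>I. \<Sum>d<n i. (cmod (\<Sum>c<m. V i d c * u c))^2) \<le> (\<Sum>c<m. (cmod (u c))^2)"
    using mixture_purifications_contraction[where \<rho>=\<rho> and \<phi>=\<phi> and n=n, OF fin p \<psi> \<phi>] by blast
  define t where "t i = Re (mtrace (sandwich (n i) m (V i) \<sigma>))" for i
  have t_sum: "(\<Sum>i\<in>I. t i) \<le> 1"
    unfolding t_def by (rule mtrace_sandwich_sum_le_1[OF \<sigma> fin contr])
  have "p i * lam + (p i - t i) / ln 2 \<le> p i * h i" if i: "i \<in> I" for i
  proof (cases "p i > 0")
    case False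
    moreover have "t i \<ge> 0"
      using psd_mtrace_nonneg[OF psd_sandwich[OF \<sigma>_psd]] by (simp add: t_def less_eq_complex_def)
    ultimately show ?thesis using p[OF i] by (simp add: divide_nonpos_pos)
  next
    case True
    show ?thesis unfolding t_def h_def
      by (rule Hmin_transported_bound[OF purification_carrier[OF \<psi>] \<phi>[OF i] tr[OF i] \<sigma>_psd True feasible V[OF i]])
  qed
  then have "(\<Sum>i\<in>I. p i * lam + (p i - t i) / ln 2) \<le> (\<Sum>i\<in>I. p i * h i)"
    by (rule sum_mono)
  moreover have "(\<Sum>i\<in>I. p i * lam + (p i - t i) / ln 2) = lam + (1 - (\<Sum>i\<in>I. t i)) / ln 2"
    using p1 by (simp add: sum.distrib sum_divide_distrib[symmetric] sum_subtractf sum_distrib_right[symmetric])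
  moreover have "0 \<le> (1 - (\<Sum>i\<in>I. t i)) / ln 2" using t_sum by simp
  ultimately show ?thesis by (simp add: h_def)
qed

lemma Hmin_mixture_purification_le:
  assumes "finite I" "\<And>i. i \<in> I \<Longrightarrow> p i \<ge> 0" "(\<Sum>i\<in>I. p i) = 1"
    and \<psi>: "purification dA dB (mat (dA * dB) (dA * dB)
              (\<lambda>(j, k). \<Sum>i\<in>I. complex_of_real (p i) * \<rho> i $$ (j, k))) m \<psi>"
    and "\<And>i. i \<in> I \<Longrightarrow> purification dA dB (\<rho> i) (n i) (\<phi> i)"
    and "\<And>i. i \<in> I \<Longrightarrow> \<rho> i \<in> carrier_mat (dA * dB) (dA * dB)"
    and "\<And>i. i \<in> I \<Longrightarrow> Re (mtrace (\<rho> i)) > 0"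
  shows "Hmin dA m (ptrace_mid dA dB m (ket_bra \<psi>))
    \<le> (\<Sum>i\<in>I. p i * Hmin dA (n i) (ptrace_mid dA dB (n i) (ket_bra (\<phi> i))))"
proof -
  have "m > 0"
  proof (rule ccontr)
    assume "\<not> m > 0"
    then have "mtrace (mat (dA * dB) (dA * dB) (\<lambda>(j, k). \<Sum>i\<in>I. complex_of_real (p i) * \<rho> i $$ (j, k)))
        = mtrace (ptrace_right (dA * dB) 0 (ket_bra \<psi>))"
      using \<psi> by (simp add: purification_def)
    also have "\<dots> = 0" by (simp add: mtrace_def ptrace_right_def)
    finally show False using Re_mtrace_mixture_pos[where \<rho>=\<rho>, OF assms(1-3,6,7)] by simp
  qed
  then show ?thesis
    unfolding Hmin_eq_Sup_feasible[of dA m]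
  proof (intro cSup_least)
    show "Hmin_feasible dA m (ptrace_mid dA dB m (ket_bra \<psi>)) \<noteq> {}"
      using Hmin_feasible_nonempty[OF purification_carrier[OF \<psi>] \<open>m > 0\<close>] .
  qed (rule Hmin_feasible_mixture_le[where \<rho>=\<rho> and \<phi>=\<phi> and n=n, OF assms(1-5) assms(7)])
qed

theorem lemma12:
  fixes I :: "'i set" and p :: "'i \<Rightarrow> real" and rho :: "'i \<Rightarrow> complex mat"
    and dA dB :: nat and tau :: "complex mat"
  assumes "finite I"
    and "\<forall>i\<in>I. p i \<ge> 0" and "(\<Sum>i\<in>I. p i) = 1"
    and "\<forall>i\<in>I. subnorm_state (dA * dB) (rho i)"
    and "tau = mat (dA * dB) (dA * dB)
                 (\<lambda>(j, k). \<Sum>i\<in>I. complex_of_real (p i) * rho i $$ (j, k))"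
  shows "Hmax dA dB tau \<ge> (\<Sum>i\<in>I. p i * Hmax dA dB (rho i))"
proof -
  have psd_rho: "\<And>i. i \<in> I \<Longrightarrow> psd (dA * dB) (rho i)"
    and tr_rho: "\<And>i. i \<in> I \<Longrightarrow> Re (mtrace (rho i)) > 0"
    using assms(4) by (auto simp: subnorm_state_def)
  have "psd (dA * dB) tau"
    unfolding assms(5) by (rule psd_mixture[OF assms(1)]) (use assms(2) psd_rho in auto)
  then obtain m \<psi> where \<psi>: "purification dA dB tau m \<psi>"
    and Hmax_tau: "Hmax dA dB tau = - Hmin dA m (ptrace_mid dA dB m (ket_bra \<psi>))"
    by (rule Hmax_eq_purification)
  obtain n \<phi> where \<phi>: "\<And>i. i \<in> I \<Longrightarrow> purification dA dB (rho i) (n i) (\<phi> i)"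
    and Hmax_rho: "\<And>i. i \<in> I \<Longrightarrow> Hmax dA dB (rho i) = - Hmin dA (n i) (ptrace_mid dA dB (n i) (ket_bra (\<phi> i)))"
    using Hmax_eq_purification_family[where \<rho>=rho, OF psd_rho] by blast
  have "Hmin dA m (ptrace_mid dA dB m (ket_bra \<psi>))
      \<le> (\<Sum>i\<in>I. p i * Hmin dA (n i) (ptrace_mid dA dB (n i) (ket_bra (\<phi> i))))"
    using \<psi> \<phi> psd_carrier[OF psd_rho] tr_rho assms(2,3) unfolding assms(5)
    by (intro Hmin_mixture_purification_le[OF assms(1)]) auto
  moreover have "(\<Sum>i\<in>I. p i * Hmax dA dB (rho i))
      = - (\<Sum>i\<in>I. p i * Hmin dA (n i) (ptrace_mid dA dB (n i) (ket_bra (\<phi> i))))"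
    using Hmax_rho by (simp add: sum_negf[symmetric])
  ultimately show ?thesis using Hmax_tau by simp
qed

end
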